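(* For all integers $d,m\ge1$ there exists a constant $C_{m,d}>0$ depending only on $m,d$ such that for all $B>0$ and $n\ge1$, \[{}^*\sigma^{\mathrm{ad}}_n(\mathcal F_{d,m,B},S_L,D_{\mathrm{abs}})\le O_{m,d}\Big(\min\big\{Bn^{-m/d},\ \exp(C_{m,d}Bn^{-m/d})\,B\,n^{-1/2-m/d}\big\}\Big).\]
   Context: Let $\mathcal X=[0,1]^d$ with Lebesgue measure. For bounded measurable $f:\mathcal X\to\mathbb R$ let $L_f=\log\int_{\mathcal X}e^{f(x)}dx$. For $f\in C^m(\mathcal X)$, $\|f\|_{C^m}=\sup_{\alpha\in\mathbb N_0^d,|\alpha|_1\le m}\|\partial^\alpha f\|_\infty$, and $\mathcal F_{d,m,B}=\{f\in C^m(\mathcal X):\|f\|_{C^m}\le B\}$. $S_L(f)=L_f$, $D_{\mathrm{abs}}(a,b)=|a-b|$. $\mathcal A^{\mathrm{ad}}_n$ is the set of maps $\tilde S=\phi\circ N$ from functions to $\mathbb R$ with $N(f)=(f(x_1),f(x_2),\dots,f(x_n))$, where each $x_k\in\mathcal X$ may depend on $f(x_1),\dots,f(x_{k-1})$, and $\phi:\mathbb R^n\to\mathbb R$ arbitrary. The stochastic adaptive minimax error is ${}^*\sigma^{\mathrm{ad}}_n(\mathcal F,S,D)=\inf\sup_{f\in\mathcal F}\mathbb E_{\omega\sim P_\Omega}D(S(f),\tilde S(\omega)(f))$, where the infimum is over probability spaces $(\Omega,P_\Omega)$ and random variables $\tilde S:\Omega\to\mathcal A^{\mathrm{ad}}_n$.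 Asymptotic notation: $g\le O_{m,d}(h)$ means that for all $m,d$ there is $C'_{m,d}>0$ with $g\le C'_{m,d}h$ for all $B>0$ and all $n\ge1$. *)

theory Defs
  imports "HOL-Analysis.Analysis" "HOL-Probability.Probability"
begin

definition cube :: "(real^'d) set" where
  "cube = cbox 0 1"

definition logint :: "(real^'d \<Rightarrow> real) \<Rightarrow> real" where
  "logint f = ln (integral cube (\<lambda>x. exp (f x)))"

text \<open>D is a family of iterated partial derivatives of f up to order m on the closed cube:
  D [] = f, D (i # is) is the partial derivative in direction i of D is (one-sided at the
  boundary), and all D is with length is \<le> m are continuous on the cube.\<close>
definition Cm_family :: "nat \<Rightarrow> (real^'d \<Rightarrow> real) \<Rightarrow> ('d list \<Rightarrow> real^'d \<Rightarrow> real) \<Rightarrow> bool" where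
  "Cm_family m f D \<longleftrightarrow>
     (\<forall>x\<in>cube. D [] x = f x) \<and>
     (\<forall>is. length is \<le> m \<longrightarrow> continuous_on cube (D is)) \<and>
     (\<forall>is i x. length is < m \<and> x \<in> cube \<longrightarrow>
        ((\<lambda>t. D is (x + t *\<^sub>R axis i 1)) has_real_derivative D (i # is) x)
          (at 0 within {t. x + t *\<^sub>R axis i 1 \<in> cube}))"

definition Fclass :: "nat \<Rightarrow> real \<Rightarrow> (real^'d \<Rightarrow> real) set" where
  "Fclass m B = {f. \<exists>D. Cm_family m f D \<and>
                        (\<forall>is. length is \<le> m \<longrightarrow> (\<forall>x\<in>cube. \<bar>D is x\<bar> \<le> B))}"

fun info :: "(real list \<Rightarrow> 'a) \<Rightarrow> ('a \<Rightarrow> real) \<Rightarrow> nat \<Rightarrow> real list" where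
  "info \<psi> f 0 = []"
| "info \<psi> f (Suc k) = (let ys = info \<psi> f k in ys @ [f (\<psi> ys)])"

text \<open>Admissible randomized adaptive algorithms with n evaluations, on a probability space
  over the sample type 'w: node rules Psi w and reconstruction maps Phi w.\<close>
definition rand_alg ::
  "nat \<Rightarrow> (real^'d \<Rightarrow> real) set \<Rightarrow> 'w measure \<Rightarrow> ('w \<Rightarrow> real list \<Rightarrow> real^'d)
     \<Rightarrow> ('w \<Rightarrow> real list \<Rightarrow> real) \<Rightarrow> bool" where
  "rand_alg n F M \<Psi> \<Phi> \<longleftrightarrow>
     prob_space M \<and>
     (\<forall>\<omega>\<in>space M. \<forall>ys. \<Psi> \<omega> ys \<in> cube) \<and>
     (\<forall>f\<in>F. (\<lambda>\<omega>. \<Phi> \<omega> (info (\<Psi> \<omega>) f n)) \<in> borel_measurable M)"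

definition sigma_ad ::
  "'w itself \<Rightarrow> nat \<Rightarrow> (real^'d \<Rightarrow> real) set \<Rightarrow> ((real^'d \<Rightarrow> real) \<Rightarrow> real) \<Rightarrow> ennreal" where
  "sigma_ad _ n F S =
     (INF alg \<in> {(M :: 'w measure, \<Psi>, \<Phi>). rand_alg n F M \<Psi> \<Phi>}.
        (case alg of (M, \<Psi>, \<Phi>) \<Rightarrow>
          (SUP f\<in>F. \<integral>\<^sup>+ \<omega>. ennreal \<bar>S f - \<Phi> \<omega> (info (\<Psi> \<omega>) f n)\<bar> \<partial>M)))"

end

theory Submission
  imports Defs
begin

(*
  Both rates rest on reconstructing f from its values on a grid.  If two functions of the class
  agree on the grid of mesh 1/(K 2^m), then on every coordinate segment of length 1/K their
  difference is small at 2^m equally spaced points; repeated use of the mean value theorem then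
  bounds it by C B K^-m along the segment, and freeing one coordinate after the other gives the
  same on the whole cube.  As L is 1-Lipschitz for the sup norm, the algorithm that queries the
  grid and returns the supremum of L over the consistent functions errs by O(B n^(-m/d)).

  The randomized algorithm spends half of its budget on this grid and picks a consistent
  function g, so |f - g| <= E = O(B n^(-m/d)).  It then estimates the Riemann sum of e^f over a
  fine grid by importance sampling: fine-grid nodes are drawn with probability proportional to
  e^g (stratified inverse-CDF sampling from a uniform seed) and e^(f - g) is averaged over
  k >= n/2 of them.  These ratios lie in [e^-E, e^E], so the Monte Carlo error is
  (e^E - e^-E)/sqrt k, and taking the logarithm costs one more factor e^E; together this is
  O(exp(C B n^(-m/d)) B n^(-1/2-m/d)).
*)

lemma mem_cube_iff: "x \<in> cube \<longleftrightarrow> (\<forall>j. 0 \<le> x$j \<and> x$j \<le> 1)"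
  by (simp add: cube_def mem_box_cart)

lemma content_cube: "Henstock_Kurzweil_Integration.content (cube :: (real^'d) set) = 1"
proof -
  have "(0::real^'d) \<in> cbox 0 1"
    by (simp add: mem_box_cart)
  then have "cbox (0::real^'d) 1 \<noteq> {}"
    by blast
  then show ?thesis
    by (simp add: cube_def content_cbox_cart)
qed

definition vec_upd :: "real^'d \<Rightarrow> 'd \<Rightarrow> real \<Rightarrow> real^'d" where
  "vec_upd x k t = (\<chi> j. if j = k then t else x$j)"

lemma vec_upd_nth [simp]: "vec_upd x k t $ j = (if j = k then t else x$j)"
  by (simp add: vec_upd_def)

lemma vec_upd_same [simp]: "vec_upd x k (x$k) = x"
  by (simp add: vec_eq_iff)

lemma vec_upd_in_cube: "x \<in> cube \<Longrightarrow> t \<in> {0..1} \<Longrightarrow> vec_upd x k t \<in> cube"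
  by (auto simp: mem_cube_iff)

lemma has_real_derivative_vec_upd:
  assumes "Cm_family m f D" "length is < m" "x \<in> cube" "t \<in> {0..1}"
  shows "((\<lambda>s. D is (vec_upd x k s)) has_real_derivative D (k # is) (vec_upd x k t))
           (at t within {0..1})"
proof -
  let ?y = "vec_upd x k t" and ?S = "{s. vec_upd x k t + s *\<^sub>R axis k 1 \<in> cube}"
  have shift: "?y + (s - t) *\<^sub>R axis k 1 = vec_upd x k s" for s
    by (simp add: vec_eq_iff axis_def)
  have shift': "?y + s *\<^sub>R axis k 1 = vec_upd x k (s + t)" for s
    using shift[of "s + t"] by simp
  have "((\<lambda>s. D is (?y + s *\<^sub>R axis k 1)) has_real_derivative D (k # is) ?y) (at 0 within ?S)"
    using assms by (simp add: Cm_family_def vec_upd_in_cube)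
  moreover have "(\<lambda>s. s - t) ` {0..1} \<subseteq> ?S"
    using assms(3) by (auto simp: shift' vec_upd_in_cube)
  ultimately have "((\<lambda>s. D is (?y + s *\<^sub>R axis k 1)) has_real_derivative D (k # is) ?y)
      (at ((\<lambda>s. s - t) t) within (\<lambda>s. s - t) ` {0..1})"
    by (auto intro: has_field_derivative_subset)
  moreover have "((\<lambda>s. s - t) has_real_derivative 1) (at t within {0..1})"
    by (auto intro!: derivative_eq_intros)
  ultimately show ?thesis
    using DERIV_image_chain by (fastforce simp: comp_def shift)
qed

lemma exists_small_derivative_between:
  fixes f :: "real \<Rightarrow> real"
  assumes deriv: "\<And>t. t \<in> {u..v} \<Longrightarrow> (f has_real_derivative f' t) (at t within {u..v})"
    and "g > 0" "u + g \<le> v" "\<bar>f u\<bar> \<le> \<eta>" "\<bar>f v\<bar> \<le> \<eta>"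
  shows "\<exists>x\<in>{u..v}. \<bar>f' x\<bar> \<le> 2 * \<eta> / g"
proof -
  have "\<exists>x\<in>{u..v}. f v - f u = (\<lambda>h. f' x * h) (v - u)"
    using assms by (intro mvt_very_simple) (auto simp: has_field_derivative_def)
  then obtain x where x: "x \<in> {u..v}" "f v - f u = f' x * (v - u)"
    by auto
  have "\<bar>f' x\<bar> * g \<le> \<bar>f' x\<bar> * (v - u)"
    using assms by (intro mult_left_mono) auto
  also have "\<dots> \<le> 2 * \<eta>"
    using x assms by (simp add: abs_mult)
  finally show ?thesis
    using x \<open>g > 0\<close> by (auto simp: field_simps)
qed

lemma abs_le_if_small_at_separated_points:
  fixes \<psi> :: "nat \<Rightarrow> real \<Rightarrow> real"
  assumes "a \<le> b" "g > 0"
    and "\<And>j t. j < r \<Longrightarrow> t \<in> {a..b} \<Longrightarrow>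
           (\<psi> j has_real_derivative \<psi> (Suc j) t) (at t within {a..b})"
    and "\<And>t. t \<in> {a..b} \<Longrightarrow> \<bar>\<psi> r t\<bar> \<le> M"
    and "\<And>i. i < 2^r \<Longrightarrow> z i \<in> {a..b} \<and> \<bar>\<psi> 0 (z i)\<bar> \<le> \<eta>"
    and "\<And>i. Suc i < 2^r \<Longrightarrow> z i + g \<le> z (Suc i)"
    and "t \<in> {a..b}"
  shows "\<bar>\<psi> 0 t\<bar> \<le> (\<Sum>i<r. (2 * (b - a) / g)^i) * \<eta> + (b - a)^r * M"
  using assms(3-)
proof (induction r arbitrary: \<psi> z \<eta> t)
  case 0
  then show ?case by simp
next
  case (Suc r)
  let ?\<rho> = "2 * (b - a) / g"
  have "\<exists>x. i < 2^r \<longrightarrow> x \<in> {z (2*i)..z (2*i+1)} \<and> \<bar>\<psi> 1 x\<bar> \<le> 2 * \<eta> / g" for i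
  proof (cases "i < 2^r")
    case True
    then have z: "z (2*i) \<in> {a..b}" "z (2*i+1) \<in> {a..b}"
      "\<bar>\<psi> 0 (z (2*i))\<bar> \<le> \<eta>" "\<bar>\<psi> 0 (z (2*i+1))\<bar> \<le> \<eta>" "z (2*i) + g \<le> z (2*i+1)"
      using Suc.prems(3,4)[of "2*i"] Suc.prems(3)[of "2*i+1"] by auto
    have "\<exists>x\<in>{z (2*i)..z (2*i+1)}. \<bar>\<psi> 1 x\<bar> \<le> 2 * \<eta> / g"
    proof (rule exists_small_derivative_between[where f = "\<psi> 0"])
      show "(\<psi> 0 has_real_derivative \<psi> 1 t) (at t within {z (2*i)..z (2*i+1)})"
        if "t \<in> {z (2*i)..z (2*i+1)}" for t
        using Suc.prems(1)[of 0 t] z that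
        by (auto intro: has_field_derivative_subset[where s = "{a..b}"])
    qed (use z \<open>g > 0\<close> in auto)
    then show ?thesis by blast
  qed simp
  then obtain \<xi> where \<xi>: "\<And>i. i < 2^r \<Longrightarrow> \<xi> i \<in> {z (2*i)..z (2*i+1)} \<and> \<bar>\<psi> 1 (\<xi> i)\<bar> \<le> 2 * \<eta> / g"
    by metis
  have \<xi>_in: "\<xi> i \<in> {a..b}" if "i < 2^r" for i
    using \<xi>[OF that] Suc.prems(3)[of "2*i"] Suc.prems(3)[of "2*i+1"] that by auto
  have \<xi>_sep: "\<xi> i + g \<le> \<xi> (Suc i)" if "Suc i < 2^r" for i
    using \<xi>[of i] \<xi>[OF that] Suc.prems(4)[of "2*i+1"] that by auto
  let ?M1 = "(\<Sum>i<r. ?\<rho>^i) * (2 * \<eta> / g) + (b - a)^r * M"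
  have \<psi>1: "\<bar>\<psi> 1 s\<bar> \<le> ?M1" if "s \<in> {a..b}" for s
    using Suc.IH[of "\<lambda>j. \<psi> (Suc j)" \<xi> "2 * \<eta> / g" s] Suc.prems(1,2) \<xi> \<xi>_in \<xi>_sep that
    by auto
  have z0: "z 0 \<in> {a..b}" "\<bar>\<psi> 0 (z 0)\<bar> \<le> \<eta>"
    using Suc.prems(3)[of 0] by auto
  have "\<bar>\<psi> 0 t - \<psi> 0 (z 0)\<bar> \<le> ?M1 * \<bar>t - z 0\<bar>"
    using field_differentiable_bound[of "{a..b}" "\<psi> 0" "\<psi> 1" ?M1 t "z 0"]
      Suc.prems(1)[of 0] \<psi>1 z0 Suc.prems(5) by auto
  also have "\<dots> \<le> ?M1 * (b - a)"
    using \<psi>1[OF z0(1)] z0 Suc.prems(5) by (intro mult_left_mono) auto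
  finally have "\<bar>\<psi> 0 t\<bar> \<le> \<eta> + ?M1 * (b - a)"
    using z0 by linarith
  also have "\<dots> = (1 + ?\<rho> * (\<Sum>i<r. ?\<rho>^i)) * \<eta> + (b - a)^Suc r * M"
    by (simp add: field_simps)
  also have "1 + ?\<rho> * (\<Sum>i<r. ?\<rho>^i) = (\<Sum>i<Suc r. ?\<rho>^i)"
    by (simp only: sum.lessThan_Suc_shift power_0 power_Suc sum_distrib_left)
  finally show ?case .
qed

section \<open>Functions of the class that agree on a grid\<close>

lemma FclassE:
  assumes "f \<in> Fclass m B"
  obtains D where "Cm_family m f D" "\<And>is x. length is \<le> m \<Longrightarrow> x \<in> cube \<Longrightarrow> \<bar>D is x\<bar> \<le> B"
  using assms unfolding Fclass_def by blast

lemma Fclass_continuous_on: "f \<in> Fclass m B \<Longrightarrow> continuous_on cube f"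
proof -
  assume "f \<in> Fclass m B"
  then obtain D where D: "Cm_family m f D"
    by (rule FclassE)
  then have "\<forall>is. length is \<le> m \<longrightarrow> continuous_on cube (D is)"
    by (simp add: Cm_family_def)
  then have "continuous_on cube (D [])"
    by (metis le0 list.size(3))
  then show ?thesis
    by (rule continuous_on_eq) (use D in \<open>simp add: Cm_family_def\<close>)
qed

lemma Fclass_abs_le: "f \<in> Fclass m B \<Longrightarrow> x \<in> cube \<Longrightarrow> \<bar>f x\<bar> \<le> B"
  by (erule FclassE) (metis Cm_family_def le0 list.size(3))

lemma Fclass_bound_nonneg: "f \<in> Fclass m B \<Longrightarrow> 0 \<le> B"
  using Fclass_abs_le[of f m B 0] by (force simp: mem_cube_iff)

definition grid_coords :: "nat \<Rightarrow> real set" where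
  "grid_coords N = {real c / real N | c. c < N}"

definition grid :: "nat \<Rightarrow> (real^'d) set" where
  "grid N = {x. \<forall>j. x$j \<in> grid_coords N}"

lemma grid_coords_eq_image: "grid_coords N = (\<lambda>c. real c / real N) ` {..<N}"
  by (auto simp: grid_coords_def)

lemma grid_coords_bounds: "t \<in> grid_coords N \<Longrightarrow> 0 \<le> t \<and> t + 1 / real N \<le> 1"
  by (auto simp: grid_coords_def add_divide_distrib[symmetric] divide_le_eq_1)

lemma grid_eq_image: "grid N = vec_lambda ` (PiE UNIV (\<lambda>_. grid_coords N))"
proof (intro equalityI subsetI)
  fix x :: "real^'d"
  assume "x \<in> grid N"
  then have "vec_nth x \<in> PiE UNIV (\<lambda>_. grid_coords N)"
    by (auto simp: grid_def)
  then show "x \<in> vec_lambda ` (PiE UNIV (\<lambda>_. grid_coords N))"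
    by (metis image_eqI vec_nth_inverse)
qed (auto simp: grid_def)

lemma finite_grid: "finite (grid N)"
  unfolding grid_eq_image by (intro finite_imageI finite_PiE) (auto simp: grid_coords_eq_image)

lemma card_grid_le: "card (grid N :: (real^'d) set) \<le> N ^ CARD('d)"
proof -
  have "card (grid N :: (real^'d) set) \<le> card (PiE (UNIV :: 'd set) (\<lambda>_. grid_coords N))"
    by (simp add: grid_eq_image card_image_le finite_PiE grid_coords_eq_image)
  also have "\<dots> \<le> N ^ CARD('d)"
    using card_image_le[of "{..<N}" "\<lambda>c. real c / real N"]
    by (simp add: card_PiE grid_coords_eq_image power_mono)
  finally show ?thesis .
qed

lemma grid_subset_cube: "grid N \<subseteq> cube"
proof
  fix x :: "real^'d"
  assume "x \<in> grid N"
  then have "0 \<le> x$j \<and> x$j + 1 / real N \<le> 1" for j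
    using grid_coords_bounds by (auto simp: grid_def)
  moreover have "0 \<le> 1 / real N"
    by simp
  ultimately show "x \<in> cube"
    unfolding mem_cube_iff by (meson add_increasing2 order_trans le_add_same_cancel1)
qed

lemma zero_in_grid: "N \<ge> 1 \<Longrightarrow> 0 \<in> grid N"
  by (force simp: grid_def grid_coords_def)

lemma exists_grid_interval:
  assumes "K \<ge> 1" "0 \<le> t" "t \<le> 1"
  shows "\<exists>c::nat. c < K \<and> real c \<le> real K * t \<and> real K * t \<le> real c + 1"
proof (cases "t = 1")
  case True
  then show ?thesis
    using assms by (intro exI[of _ "K - 1"]) (auto simp: of_nat_diff)
next
  case False
  then have "real K * t < real K"
    using assms by auto
  moreover have "\<lfloor>real K * t\<rfloor> \<ge> 0"
    using assms by auto
  ultimately show ?thesis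
    by (intro exI[of _ "nat \<lfloor>real K * t\<rfloor>"]) (auto simp: of_nat_nat; linarith)
qed

fun interp_const :: "nat \<Rightarrow> nat \<Rightarrow> real" where
  "interp_const m 0 = 0"
| "interp_const m (Suc s) = (\<Sum>i<m. (2 * 2^m)^i) * interp_const m s + 2"

lemma interp_const_nonneg: "interp_const m s \<ge> 0"
  by (induction s) (auto intro!: add_nonneg_nonneg mult_nonneg_nonneg sum_nonneg)

lemma Fclass_diff_on_coord_segment:
  fixes f1 f2 :: "real^'d \<Rightarrow> real"
  assumes f1: "f1 \<in> Fclass m B" and f2: "f2 \<in> Fclass m B" and x: "x \<in> cube"
    and ab: "0 \<le> a" "a \<le> t" "t \<le> b" "b \<le> 1" and "g > 0"
    and small: "\<And>i. i < 2^m \<Longrightarrow> z i \<in> {a..b} \<and> \<bar>f1 (vec_upd x k (z i)) - f2 (vec_upd x k (z i))\<bar> \<le> \<eta>"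
    and sep: "\<And>i. Suc i < 2^m \<Longrightarrow> z i + g \<le> z (Suc i)"
  shows "\<bar>f1 (vec_upd x k t) - f2 (vec_upd x k t)\<bar> \<le> (\<Sum>i<m. (2 * (b - a) / g)^i) * \<eta> + (b - a)^m * (2 * B)"
proof -
  obtain D1 where C1: "Cm_family m f1 D1"
    and B1: "\<And>is x. length is \<le> m \<Longrightarrow> x \<in> cube \<Longrightarrow> \<bar>D1 is x\<bar> \<le> B"
    using FclassE[OF f1] by blast
  obtain D2 where C2: "Cm_family m f2 D2"
    and B2: "\<And>is x. length is \<le> m \<Longrightarrow> x \<in> cube \<Longrightarrow> \<bar>D2 is x\<bar> \<le> B"
    using FclassE[OF f2] by blast
  have ab_sub: "{a..b} \<subseteq> {0..1}"
    using ab by auto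
  define \<psi> where "\<psi> = (\<lambda>r s. D1 (replicate r k) (vec_upd x k s) - D2 (replicate r k) (vec_upd x k s))"
  have \<psi>_0: "\<psi> 0 s = f1 (vec_upd x k s) - f2 (vec_upd x k s)" if "s \<in> {a..b}" for s
    using C1 C2 vec_upd_in_cube[OF x] that ab_sub by (auto simp: \<psi>_def Cm_family_def)
  have "(\<psi> j has_real_derivative \<psi> (Suc j) s) (at s within {a..b})" if "j < m" "s \<in> {a..b}" for j s
  proof -
    have "(\<psi> j has_real_derivative \<psi> (Suc j) s) (at s within {0..1})"
      unfolding \<psi>_def using that ab_sub x
      by (auto intro!: derivative_eq_intros
          has_real_derivative_vec_upd[OF C1] has_real_derivative_vec_upd[OF C2])
    then show ?thesis
      using ab_sub by (rule has_field_derivative_subset)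
  qed
  moreover have "\<bar>\<psi> m s\<bar> \<le> 2 * B" if "s \<in> {a..b}" for s
    using B1[of "replicate m k" "vec_upd x k s"] B2[of "replicate m k" "vec_upd x k s"]
      vec_upd_in_cube[OF x] that ab_sub
    by (force simp: \<psi>_def)
  ultimately have "\<bar>\<psi> 0 t\<bar> \<le> (\<Sum>i<m. (2 * (b - a) / g)^i) * \<eta> + (b - a)^m * (2 * B)"
    using ab \<open>g > 0\<close> small sep \<psi>_0
    by (intro abs_le_if_small_at_separated_points[where z = z]) auto
  then show ?thesis
    using \<psi>_0[of t] ab by simp
qed

lemma Fclass_diff_bound_insert_coord:
  fixes f1 f2 :: "real^'d \<Rightarrow> real"
  assumes f1: "f1 \<in> Fclass m B" and f2: "f2 \<in> Fclass m B" and K: "K \<ge> 1"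
    and close: "\<And>y. y \<in> cube \<Longrightarrow> (\<forall>j. j \<notin> S \<longrightarrow> y$j \<in> grid_coords (K * 2^m)) \<Longrightarrow>
                  \<bar>f1 y - f2 y\<bar> \<le> \<eta>"
    and x: "x \<in> cube" "\<forall>j. j \<notin> insert k S \<longrightarrow> x$j \<in> grid_coords (K * 2^m)"
  shows "\<bar>f1 x - f2 x\<bar> \<le> (\<Sum>i<m. (2 * 2^m)^i) * \<eta> + (1 / real K)^m * (2 * B)"
proof -
  have xk: "0 \<le> x$k" "x$k \<le> 1"
    using x(1) by (auto simp: mem_cube_iff)
  obtain c :: nat where c: "c < K" "real c \<le> real K * x$k" "real K * x$k \<le> real c + 1"
    using exists_grid_interval[OF K xk] by blast
  define a where "a = real c / real K"
  define b where "b = (real c + 1) / real K"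
  have Kpos: "real K > 0"
    using K by auto
  have ab: "0 \<le> a" "a \<le> x$k" "x$k \<le> b" "b \<le> 1"
    using c Kpos by (auto simp: a_def b_def field_simps)
  define z where "z = (\<lambda>i. real (c * 2^m + i) / real (K * 2^m))"
  have small: "z i \<in> {a..b} \<and> \<bar>f1 (vec_upd x k (z i)) - f2 (vec_upd x k (z i))\<bar> \<le> \<eta>"
    if i: "i < 2^m" for i
  proof -
    have "real (c * 2^m) \<le> real (c * 2^m + i)" "real (c * 2^m + i) \<le> real ((c + 1) * 2^m)"
      using i by simp_all
    then have zab: "z i \<in> {a..b}"
      using Kpos unfolding z_def a_def b_def by (auto simp: field_simps)
    have "c * 2^m + i < (c + 1) * 2^m" "(c + 1) * 2^m \<le> K * 2^m"
      using i c(1) by (simp_all only: Suc_le_eq[symmetric] mult_le_mono1) simp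
    then have "z i \<in> grid_coords (K * 2^m)"
      unfolding z_def grid_coords_def by (intro CollectI exI[of _ "c * 2^m + i"]) simp
    then have "\<bar>f1 (vec_upd x k (z i)) - f2 (vec_upd x k (z i))\<bar> \<le> \<eta>"
      using x zab ab by (intro close vec_upd_in_cube) auto
    with zab show ?thesis
      by blast
  qed
  have sep: "z i + 1 / real (K * 2^m) \<le> z (Suc i)" for i
    by (simp add: z_def add_divide_distrib[symmetric] add_ac)
  have "1 / real (K * 2^m) > 0"
    using Kpos by simp
  then have "\<bar>f1 (vec_upd x k (x$k)) - f2 (vec_upd x k (x$k))\<bar>
      \<le> (\<Sum>i<m. (2 * (b - a) / (1 / real (K * 2^m)))^i) * \<eta> + (b - a)^m * (2 * B)"
    by (rule Fclass_diff_on_coord_segment[where z = z and k = k, OF f1 f2 x(1) ab _ small sep])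
  moreover have "b - a = 1 / real K"
    by (simp add: a_def b_def diff_divide_distrib[symmetric])
  ultimately show ?thesis
    using Kpos by simp
qed

lemma Fclass_close_if_agree_on_grid:
  fixes f1 f2 :: "real^'d \<Rightarrow> real"
  assumes "f1 \<in> Fclass m B" "f2 \<in> Fclass m B" "K \<ge> 1"
    and agree: "\<And>x. x \<in> grid (K * 2^m) \<Longrightarrow> f1 x = f2 x"
    and "x \<in> cube"
  shows "\<bar>f1 x - f2 x\<bar> \<le> interp_const m CARD('d) * B * (1 / real K)^m"
proof -
  have "\<bar>f1 y - f2 y\<bar> \<le> interp_const m (card S) * B * (1 / real K)^m"
    if "finite S" "y \<in> cube" "\<forall>j. j \<notin> S \<longrightarrow> y$j \<in> grid_coords (K * 2^m)" for S y
    using that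
  proof (induction S arbitrary: y rule: finite_induct)
    case empty
    then show ?case
      using agree by (simp add: grid_def)
  next
    case (insert k S)
    then have "\<bar>f1 y - f2 y\<bar> \<le> (\<Sum>i<m. (2 * 2^m)^i) * (interp_const m (card S) * B * (1 / real K)^m)
        + (1 / real K)^m * (2 * B)"
      by (intro Fclass_diff_bound_insert_coord[OF assms(1-3)]) auto
    then show ?case
      using insert.hyps by (simp add: algebra_simps)
  qed
  from this[of UNIV x] show ?thesis
    using assms(5) by simp
qed

lemma integrable_exp_on_cube:
  fixes h :: "real^'d \<Rightarrow> real"
  shows "continuous_on cube h \<Longrightarrow> (\<lambda>x. exp (h x)) integrable_on cube"
  unfolding cube_def by (intro integrable_continuous continuous_on_exp) (simp add: cube_def)

lemma integral_exp_pos: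
  fixes h :: "real^'d \<Rightarrow> real"
  assumes "continuous_on cube h"
  shows "integral cube (\<lambda>x. exp (h x)) > 0"
proof -
  have "(0::real^'d) \<in> cube"
    by (simp add: mem_cube_iff)
  then obtain x0 where x0: "x0 \<in> cube" "\<And>y. y \<in> cube \<Longrightarrow> h x0 \<le> h y"
    using continuous_attains_inf[of cube h] assms by (auto simp: cube_def)
  have "exp (h x0) = integral cube (\<lambda>_::real^'d. exp (h x0))"
    using content_cube[where 'd = 'd] by (simp add: cube_def)
  also have "\<dots> \<le> integral cube (\<lambda>x. exp (h x))"
    using x0 assms integrable_exp_on_cube[OF assms]
    by (intro integral_le) (auto simp: cube_def)
  finally show ?thesis
    using exp_gt_zero less_le_trans by blast
qed

lemma logint_le_add:
  fixes h1 h2 :: "real^'d \<Rightarrow> real"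
  assumes "continuous_on cube h1" "continuous_on cube h2" "\<And>x. x \<in> cube \<Longrightarrow> h1 x \<le> h2 x + c"
  shows "logint h1 \<le> logint h2 + c"
proof -
  have "integral cube (\<lambda>x. exp (h1 x)) \<le> integral cube (\<lambda>x. exp c * exp (h2 x))"
  proof (rule integral_le)
    show "(\<lambda>x. exp (h1 x)) integrable_on cube" "(\<lambda>x. exp c * exp (h2 x)) integrable_on cube"
      using assms(1,2) by (auto intro: integrable_on_cmult_left integrable_exp_on_cube)
    show "exp (h1 x) \<le> exp c * exp (h2 x)" if "x \<in> cube" for x
      using assms(3)[OF that] by (simp add: mult_exp_exp add.commute)
  qed
  then have "logint h1 \<le> ln (exp c * integral cube (\<lambda>x. exp (h2 x)))"
    unfolding logint_def using integral_exp_pos[OF assms(1)] by simp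
  then show ?thesis
    using integral_exp_pos[OF assms(2)] by (simp add: ln_mult logint_def)
qed

lemma abs_logint_diff_le:
  fixes f1 f2 :: "real^'d \<Rightarrow> real"
  assumes "continuous_on cube f1" "continuous_on cube f2" "\<And>x. x \<in> cube \<Longrightarrow> \<bar>f1 x - f2 x\<bar> \<le> E"
  shows "\<bar>logint f1 - logint f2\<bar> \<le> E"
proof -
  have "logint f1 \<le> logint f2 + E" "logint f2 \<le> logint f1 + E"
    using assms(3) by (intro logint_le_add assms(1,2); force simp: abs_le_iff)+
  then show ?thesis
    by linarith
qed

lemma abs_logint_le:
  fixes f :: "real^'d \<Rightarrow> real"
  assumes "f \<in> Fclass m B"
  shows "\<bar>logint f\<bar> \<le> B"
proof -
  have "logint (\<lambda>_::real^'d. 0) = 0"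
    using content_cube[where 'd = 'd] by (simp add: logint_def cube_def)
  moreover have "\<bar>logint f - logint (\<lambda>_::real^'d. 0)\<bar> \<le> B"
    using Fclass_continuous_on[OF assms] Fclass_abs_le[OF assms]
    by (intro abs_logint_diff_le) auto
  ultimately show ?thesis
    by simp
qed

lemma length_info [simp]: "length (info \<psi> f n) = n"
  by (induction n) (auto simp: Let_def)

lemma nth_info: "j < n \<Longrightarrow> info \<psi> f n ! j = f (\<psi> (info \<psi> f j))"
  by (induction n) (auto simp: Let_def nth_append less_Suc_eq)

lemma take_info: "j \<le> n \<Longrightarrow> take j (info \<psi> f n) = info \<psi> f j"
  by (induction n) (auto simp: Let_def le_Suc_eq)

lemma info_cong: "(\<And>ys. length ys < n \<Longrightarrow> \<psi>1 ys = \<psi>2 ys) \<Longrightarrow> info \<psi>1 f n = info \<psi>2 f n"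
  by (induction n) (auto simp: Let_def)

lemma sigma_ad_le_uniform:
  fixes \<Psi> :: "'w \<Rightarrow> real list \<Rightarrow> real^'d"
  assumes \<Omega>: "finite \<Omega>" "\<Omega> \<noteq> {}" and \<Psi>: "\<And>\<omega> ys. \<Psi> \<omega> ys \<in> cube"
    and err: "\<And>f. f \<in> F \<Longrightarrow> (\<Sum>\<omega>\<in>\<Omega>. \<bar>S f - \<Phi> \<omega> (info (\<Psi> \<omega>) f n)\<bar>) / card \<Omega> \<le> b"
  shows "sigma_ad TYPE('w) n F S \<le> ennreal b"
proof -
  let ?M = "measure_pmf (pmf_of_set \<Omega>)"
  have "rand_alg n F ?M \<Psi> \<Phi>"
    using \<Psi> by (simp add: rand_alg_def prob_space_measure_pmf)
  moreover have "(\<integral>\<^sup>+\<omega>. ennreal \<bar>S f - \<Phi> \<omega> (info (\<Psi> \<omega>) f n)\<bar> \<partial>?M) \<le> ennreal b" if "f \<in> F" for f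
  proof -
    have "(\<integral>\<^sup>+\<omega>. ennreal \<bar>S f - \<Phi> \<omega> (info (\<Psi> \<omega>) f n)\<bar> \<partial>?M)
        = (\<Sum>\<omega>\<in>\<Omega>. ennreal \<bar>S f - \<Phi> \<omega> (info (\<Psi> \<omega>) f n)\<bar>) / of_nat (card \<Omega>)"
      by (rule nn_integral_pmf_of_set[OF \<Omega>(2,1)])
    also have "\<dots> = ennreal ((\<Sum>\<omega>\<in>\<Omega>. \<bar>S f - \<Phi> \<omega> (info (\<Psi> \<omega>) f n)\<bar>) / card \<Omega>)"
      using \<Omega> by (simp add: sum_ennreal ennreal_of_nat_eq_real_of_nat divide_ennreal card_gt_0_iff)
    also have "\<dots> \<le> ennreal b"
      using err[OF that] by (rule ennreal_leI)
    finally show ?thesis .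
  qed
  ultimately show ?thesis
    unfolding sigma_ad_def by (intro INF_lower2[of "(?M, \<Psi>, \<Phi>)"]) (auto intro: SUP_least)
qed

lemma sigma_ad_le_deterministic:
  fixes \<Psi> :: "real list \<Rightarrow> real^'d"
  assumes "\<And>ys. \<Psi> ys \<in> cube" "\<And>f. f \<in> F \<Longrightarrow> \<bar>S f - \<Phi> (info \<Psi> f n)\<bar> \<le> b"
  shows "sigma_ad TYPE('w) n F S \<le> ennreal b"
  using sigma_ad_le_uniform[of "{undefined}" "\<lambda>_. \<Psi>" F S "\<lambda>_. \<Phi>" n b] assms by simp

section \<open>The deterministic algorithm\<close>

definition enum_list :: "'a set \<Rightarrow> 'a list" where
  "enum_list A = (SOME xs. set xs = A \<and> distinct xs)"

lemma
  assumes "finite A"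
  shows set_enum_list: "set (enum_list A) = A"
    and distinct_enum_list: "distinct (enum_list A)"
  using someI_ex[OF finite_distinct_list[OF assms]] by (auto simp: enum_list_def)

lemma length_enum_list: "finite A \<Longrightarrow> length (enum_list A) = card A"
  using distinct_card[of "enum_list A"] by (simp add: set_enum_list distinct_enum_list)

definition query_list :: "(real^'d) list \<Rightarrow> real list \<Rightarrow> real^'d" where
  "query_list xs ys = (if length ys < length xs then xs ! length ys else 0)"

lemma query_list_in_cube: "set xs \<subseteq> cube \<Longrightarrow> query_list xs ys \<in> cube"
  by (auto simp: query_list_def mem_cube_iff[of 0])

lemma info_query_list: "info (query_list xs) f (length xs) = map f xs"
  by (simp add: list_eq_iff_nth_eq nth_info query_list_def)

definition consistent :: "nat \<Rightarrow> real \<Rightarrow> (real^'d) list \<Rightarrow> real list \<Rightarrow> (real^'d \<Rightarrow> real) set" where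
  "consistent m B xs ys = {h \<in> Fclass m B. map h xs = take (length xs) ys}"

definition sup_logint :: "nat \<Rightarrow> real \<Rightarrow> (real^'d) list \<Rightarrow> real list \<Rightarrow> real" where
  "sup_logint m B xs ys = Sup (logint ` consistent m B xs ys)"

lemma consistent_close:
  fixes h f :: "real^'d \<Rightarrow> real"
  assumes "set xs = grid (K * 2^m)" "K \<ge> 1"
    and "h \<in> consistent m B xs ys" "f \<in> consistent m B xs ys" "x \<in> cube"
  shows "\<bar>h x - f x\<bar> \<le> interp_const m CARD('d) * B * (1 / real K)^m"
proof (rule Fclass_close_if_agree_on_grid)
  have "map h xs = map f xs"
    using assms(3,4) by (simp add: consistent_def)
  then show "h y = f y" if "y \<in> grid (K * 2^m)" for y
    using that assms(1) by (simp add: map_eq_conv)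
qed (use assms in \<open>auto simp: consistent_def\<close>)

lemma abs_logint_sup_logint_le:
  fixes f :: "real^'d \<Rightarrow> real"
  assumes "set xs = grid (K * 2^m)" "K \<ge> 1" "f \<in> consistent m B xs ys"
  shows "\<bar>logint f - sup_logint m B xs ys\<bar> \<le> interp_const m CARD('d) * B * (1 / real K)^m"
proof -
  let ?E = "interp_const m CARD('d) * B * (1 / real K)^m"
  have close: "\<bar>logint h - logint f\<bar> \<le> ?E" if "h \<in> consistent m B xs ys" for h
    using that assms consistent_close[OF assms(1,2) that assms(3)]
    by (intro abs_logint_diff_le Fclass_continuous_on) (auto simp: consistent_def)
  then have "bdd_above (logint ` consistent m B xs ys)"
    by (intro bdd_aboveI[of _ "logint f + ?E"]) (force simp: abs_le_iff)
  then have "logint f \<le> sup_logint m B xs ys"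
    unfolding sup_logint_def using assms(3) by (intro cSup_upper) auto
  moreover have "sup_logint m B xs ys \<le> logint f + ?E"
    unfolding sup_logint_def using assms(3) close by (intro cSup_least) (force simp: abs_le_iff)+
  ultimately show ?thesis
    by (simp add: abs_le_iff)
qed

lemma exists_grid_resolution:
  fixes x :: real
  assumes "d \<ge> 1" "P \<ge> 1" "real P ^ d \<le> x"
  obtains K :: nat where "K \<ge> 1" "real ((K * P) ^ d) \<le> x"
    "(1 / real K) ^ m \<le> (2 * real P) ^ m * x powr (- (real m / real d))"
proof -
  have "1 \<le> real P ^ d"
    using assms(2) by (intro one_le_power) simp
  then have "x > 0"
    using assms(3) by linarith
  define r where "r = x powr (1 / real d)"
  have r_pow: "r ^ k = x powr (real k / real d)" for k
    using \<open>x > 0\<close> by (simp add: r_def powr_realpow[symmetric] powr_powr)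
  have "real P = (real P ^ d) powr (1 / real d)"
    using assms by (simp add: powr_realpow[symmetric] powr_powr)
  also have "\<dots> \<le> r"
    unfolding r_def using assms by (intro powr_mono2) auto
  finally have "1 \<le> r / real P"
    using assms by simp
  define K where "K = nat \<lfloor>r / real P\<rfloor>"
  have "real K = of_int \<lfloor>r / real P\<rfloor>" "K \<ge> 1"
    using \<open>1 \<le> r / real P\<close> by (simp_all add: K_def le_nat_iff)
  then have K: "K \<ge> 1" "real K \<le> r / real P" "r / real P \<le> 2 * real K"
    using real_of_int_floor_add_one_gt[of "r / real P"] by linarith+
  have "real (K * P) ^ d \<le> r ^ d"
    using K assms by (intro power_mono) (auto simp: field_simps)
  then have size: "real ((K * P) ^ d) \<le> x"
    using r_pow[of d] \<open>x > 0\<close> assms(1) by simp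
  have "r > 0" "real K > 0" "real P > 0"
    using \<open>x > 0\<close> K(1) assms(2) by (simp_all add: r_def)
  then have "1 / real K \<le> 2 * real P / r"
    using K(3) by (simp add: field_simps)
  then have "(1 / real K) ^ m \<le> (2 * real P / r) ^ m"
    by (intro power_mono) auto
  also have "\<dots> = (2 * real P) ^ m / x powr (real m / real d)"
    by (simp add: power_divide r_pow)
  finally have "(1 / real K) ^ m \<le> (2 * real P) ^ m * x powr (- (real m / real d))"
    by (simp add: powr_minus divide_inverse)
  with K size show ?thesis
    using that by blast
qed

lemma card_ge_1: "CARD('d::finite) \<ge> 1"
  using finite_UNIV_card_ge_0[where 'a = 'd] by simp

lemma sigma_ad_le_grid_algorithm:
  assumes "K \<ge> 1" "(K * 2^m) ^ CARD('d) \<le> n"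
  shows "sigma_ad TYPE('w) n (Fclass m B :: (real^'d \<Rightarrow> real) set) logint
    \<le> ennreal (interp_const m CARD('d) * B * (1 / real K)^m)"
proof -
  define xs where "xs = enum_list (grid (K * 2^m) :: (real^'d) set)"
  have xs: "set xs = grid (K * 2^m)" "length xs \<le> n"
    using assms(2) card_grid_le[where 'd = 'd, of "K * 2^m"]
    by (simp_all add: xs_def set_enum_list length_enum_list finite_grid)
  have "f \<in> consistent m B xs (info (query_list xs) f n)" if "f \<in> Fclass m B" for f
    using that xs(2) by (simp add: consistent_def take_info info_query_list)
  then have "\<bar>logint f - sup_logint m B xs (info (query_list xs) f n)\<bar>
      \<le> interp_const m CARD('d) * B * (1 / real K)^m" if "f \<in> Fclass m B" for f
    using abs_logint_sup_logint_le[OF xs(1) assms(1)] that by blast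
  moreover have "query_list xs ys \<in> cube" for ys
    using xs(1) grid_subset_cube by (intro query_list_in_cube) auto
  ultimately show ?thesis
    by (intro sigma_ad_le_deterministic)
qed

lemma sigma_ad_le_bound:
  "sigma_ad TYPE('w) n (Fclass m B :: (real^'d \<Rightarrow> real) set) logint \<le> ennreal B"
  using abs_logint_le
  by (intro sigma_ad_le_deterministic[where \<Psi> = "\<lambda>_. 0" and \<Phi> = "\<lambda>_. 0"])
     (auto simp: mem_cube_iff)

lemma sigma_ad_deterministic_rate:
  "\<exists>c>0. \<forall>B>0. \<forall>n\<ge>1. sigma_ad TYPE('w) n (Fclass m B :: (real^'d \<Rightarrow> real) set) logint
      \<le> ennreal (c * (B * real n powr (- (real m / real CARD('d)))))"
proof (intro exI conjI allI impI)
  define d where "d = CARD('d)"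
  let ?c = "(interp_const m d + 1) * (2 * 2^m)^m"
  show "?c > 0"
    using interp_const_nonneg[of m d] by (intro mult_pos_pos) auto
  fix B :: real and n :: nat
  assume "B > 0" "n \<ge> 1"
  let ?rate = "real n powr (- (real m / real d))"
  have d: "d \<ge> 1"
    unfolding d_def by (rule card_ge_1)
  have c: "(2 * 2^m)^m \<le> ?c"
    using interp_const_nonneg[of m d] by (simp add: distrib_right)
  show "sigma_ad TYPE('w) n (Fclass m B :: (real^'d \<Rightarrow> real) set) logint \<le> ennreal (?c * (B * ?rate))"
  proof (cases "(2^m)^d \<le> n")
    case True
    then have "real (2^m) ^ d \<le> real n"
      by (metis of_nat_le_iff of_nat_power)
    then obtain K where K: "K \<ge> 1" "real ((K * 2^m) ^ d) \<le> real n"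
      "(1 / real K) ^ m \<le> (2 * 2^m) ^ m * ?rate"
      using exists_grid_resolution[OF d, of "2^m" "real n" m] by auto
    have "sigma_ad TYPE('w) n (Fclass m B :: (real^'d \<Rightarrow> real) set) logint
        \<le> ennreal (interp_const m d * B * (1 / real K)^m)"
      using K(2) unfolding d_def of_nat_le_iff by (rule sigma_ad_le_grid_algorithm[OF K(1)])
    also have "interp_const m d * B * (1 / real K)^m \<le> interp_const m d * B * ((2 * 2^m)^m * ?rate)"
      using K(3) \<open>B > 0\<close> interp_const_nonneg[of m d] by (intro mult_left_mono) auto
    also have "\<dots> \<le> ?c * (B * ?rate)"
      using \<open>B > 0\<close> by (simp add: algebra_simps)
    finally show ?thesis
      by (simp add: ennreal_leI)
  next
    case False
    have "real n powr (real m / real d) \<le> (real (2^m) ^ d) powr (real m / real d)"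
      using False by (intro powr_mono2) (auto simp flip: of_nat_power)
    also have "\<dots> = (2^m) ^ m"
      using d by (simp add: powr_realpow[symmetric] powr_powr)
    finally have "1 \<le> (2^m) ^ m * ?rate"
      using \<open>n \<ge> 1\<close> by (simp add: powr_minus field_simps)
    also have "\<dots> \<le> ?c * ?rate"
      using c order_trans[OF power_mono[of "(2::real)^m" "2 * 2^m" m] c]
      by (intro mult_right_mono) auto
    finally have "B \<le> ?c * (B * ?rate)"
      using \<open>B > 0\<close> by (simp add: mult_ac)
    with sigma_ad_le_bound show ?thesis
      by (rule order_trans[OF _ ennreal_leI])
  qed
qed

lemma Fclass_abs_diff_le_coord_sum:
  fixes f :: "real^'d \<Rightarrow> real"
  assumes f: "f \<in> Fclass m B" and m: "m \<ge> 1" and x: "x \<in> cube" and y: "y \<in> cube"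
  shows "\<bar>f x - f y\<bar> \<le> B * (\<Sum>j\<in>UNIV. \<bar>x$j - y$j\<bar>)"
proof -
  obtain D where C: "Cm_family m f D" and bd: "\<And>is x. length is \<le> m \<Longrightarrow> x \<in> cube \<Longrightarrow> \<bar>D is x\<bar> \<le> B"
    using FclassE[OF f] by blast
  have coord: "\<bar>f (vec_upd z k s) - f (vec_upd z k t)\<bar> \<le> B * \<bar>s - t\<bar>"
    if z: "z \<in> cube" and st: "s \<in> {0..1}" "t \<in> {0..1}" for z k s t
  proof -
    have "norm (D [] (vec_upd z k s) - D [] (vec_upd z k t)) \<le> B * norm (s - t)"
    proof (rule field_differentiable_bound[where f' = "\<lambda>u. D [k] (vec_upd z k u)"])
      show "((\<lambda>u. D [] (vec_upd z k u)) has_real_derivative D [k] (vec_upd z k u)) (at u within {0..1})"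
        if "u \<in> {0..1}" for u
        using has_real_derivative_vec_upd[OF C _ z that] m by simp
      show "norm (D [k] (vec_upd z k u)) \<le> B" if "u \<in> {0..1}" for u
        using bd[of "[k]"] vec_upd_in_cube[OF z that] m by simp
    qed (use st in auto)
    then show ?thesis
      using C vec_upd_in_cube[OF z] st by (simp add: Cm_family_def)
  qed
  define z where "z = (\<lambda>S. (\<chi> j. if j \<in> S then x$j else y$j) :: real^'d)"
  have z_cube: "z S \<in> cube" for S
    using x y by (auto simp: z_def mem_cube_iff)
  have "\<bar>f (z S) - f y\<bar> \<le> B * (\<Sum>j\<in>S. \<bar>x$j - y$j\<bar>)" if "finite S" for S
    using that
  proof (induction S rule: finite_induct)
    case empty
    have "z {} = y"
      by (simp add: z_def vec_eq_iff)
    then show ?case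
      by simp
  next
    case (insert k S)
    have "z (insert k S) = vec_upd (z S) k (x$k)" "z S = vec_upd (z S) k (y$k)"
      using insert.hyps by (simp_all add: z_def vec_eq_iff)
    then have "\<bar>f (z (insert k S)) - f (z S)\<bar> \<le> B * \<bar>x$k - y$k\<bar>"
      using coord[OF z_cube[of S], where k = k and s = "x$k" and t = "y$k"] x y by (simp add: mem_cube_iff)
    then show ?case
      using insert by (simp add: algebra_simps)
  qed
  from this[of UNIV] show ?thesis
    by (simp add: z_def)
qed

definition cell :: "nat \<Rightarrow> real^'d \<Rightarrow> (real^'d) set" where
  "cell N y = cbox y (y + (1 / real N) *\<^sub>R 1)"

lemma mem_cell_iff: "x \<in> cell N y \<longleftrightarrow> (\<forall>j. y$j \<le> x$j \<and> x$j \<le> y$j + 1 / real N)"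
  by (simp add: cell_def mem_box_cart)

lemma cell_subset_cube:
  assumes "y \<in> grid N"
  shows "cell N y \<subseteq> cube"
proof
  fix x
  assume x: "x \<in> cell N y"
  show "x \<in> cube"
    unfolding mem_cube_iff
  proof
    fix j
    have "0 \<le> y$j" "y$j + 1 / real N \<le> 1"
      using assms grid_coords_bounds by (auto simp: grid_def)
    moreover have "y$j \<le> x$j" "x$j \<le> y$j + 1 / real N"
      using x by (auto simp: mem_cell_iff)
    ultimately show "0 \<le> x$j \<and> x$j \<le> 1"
      by linarith
  qed
qed

lemma interior_cell_nonempty:
  assumes "N \<ge> 1"
  shows "interior (cell N y) \<noteq> {}"
proof -
  have "y + (1 / (2 * real N)) *\<^sub>R 1 \<in> box y (y + (1 / real N) *\<^sub>R 1)"
    using assms by (auto simp: mem_box_cart field_simps)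
  then show ?thesis
    by (auto simp: cell_def interior_cbox)
qed

lemma interior_cells_disjoint:
  assumes "y \<in> grid N" "y' \<in> grid N" "y \<noteq> y'"
  shows "interior (cell N y) \<inter> interior (cell N y') = {}"
proof -
  obtain j where "y$j \<noteq> y'$j"
    using assms(3) by (auto simp: vec_eq_iff)
  moreover obtain c c' :: nat where c: "y$j = real c / real N" "y'$j = real c' / real N"
    using assms(1,2) by (force simp: grid_def grid_coords_def)
  ultimately have "real c + 1 \<le> real c' \<or> real c' + 1 \<le> real c"
    by (cases "c < c'") auto
  then have sep: "y$j + 1 / real N \<le> y'$j \<or> y'$j + 1 / real N \<le> y$j"
    unfolding c add_divide_distrib[symmetric] by (auto intro: divide_right_mono)
  show ?thesis
  proof (rule ccontr)
    assume "interior (cell N y) \<inter> interior (cell N y') \<noteq> {}"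
    then obtain x where "x \<in> box y (y + (1 / real N) *\<^sub>R 1)" "x \<in> box y' (y' + (1 / real N) *\<^sub>R 1)"
      by (auto simp: cell_def interior_cbox)
    then have "y$j < x$j" "x$j < y$j + 1 / real N" "y'$j < x$j" "x$j < y'$j + 1 / real N"
      by (auto simp: mem_box_cart)
    with sep show False
      by linarith
  qed
qed

lemma inj_on_cell:
  assumes "N \<ge> 1"
  shows "inj_on (cell N) (grid N)"
proof (rule inj_onI, rule ccontr)
  fix y y'
  assume "y \<in> grid N" "y' \<in> grid N" "cell N y = cell N y'" "y \<noteq> y'"
  then have "interior (cell N y) = {}"
    using interior_cells_disjoint by fastforce
  then show False
    using interior_cell_nonempty[OF assms] by blast
qed

lemma cube_subset_cells:
  fixes x :: "real^'d"
  assumes "N \<ge> 1" "x \<in> cube"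
  shows "\<exists>y\<in>grid N. x \<in> cell N y"
proof -
  have "\<forall>j. \<exists>c. c < N \<and> real c \<le> real N * x$j \<and> real N * x$j \<le> real c + 1"
    using exists_grid_interval[OF assms(1)] assms(2) by (auto simp: mem_cube_iff)
  then obtain c :: "'d \<Rightarrow> nat"
    where c: "\<And>j. c j < N \<and> real (c j) \<le> real N * x$j \<and> real N * x$j \<le> real (c j) + 1"
    by metis
  have "real N > 0"
    using assms(1) by simp
  then have "(\<chi> j. real (c j) / real N) \<in> grid N" "x \<in> cell N (\<chi> j. real (c j) / real N)"
    using c by (auto simp: grid_def grid_coords_def mem_cell_iff field_simps)
  then show ?thesis
    by blast
qed

lemma cells_division_of_cube: "N \<ge> 1 \<Longrightarrow> (cell N ` grid N) division_of cube"
proof (rule division_ofI)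
  assume N: "N \<ge> 1"
  show "finite (cell N ` grid N)"
    by (simp add: finite_grid)
  show "K \<subseteq> cube" "\<exists>a b. K = cbox a b" if "K \<in> cell N ` grid N" for K
    using that cell_subset_cube by (auto simp: cell_def)
  show "K \<noteq> {}" if "K \<in> cell N ` grid N" for K
    using that interior_cell_nonempty[OF N] interior_subset by blast
  show "interior K1 \<inter> interior K2 = {}"
    if "K1 \<in> cell N ` grid N" "K2 \<in> cell N ` grid N" "K1 \<noteq> K2" for K1 K2
    using that interior_cells_disjoint by auto
  show "\<Union> (cell N ` grid N) = cube"
    using cell_subset_cube cube_subset_cells[OF N] by blast
qed

lemma content_cell:
  assumes "N \<ge> 1"
  shows "Henstock_Kurzweil_Integration.content (cell N (y::real^'d)) = (1 / real N) ^ CARD('d)"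
proof -
  have "cell N y \<noteq> {}"
    using interior_cell_nonempty[OF assms] interior_subset by blast
  then show ?thesis
    by (simp add: cell_def content_cbox_cart)
qed

lemma Fclass_abs_diff_le_on_cell:
  fixes f :: "real^'d \<Rightarrow> real"
  assumes f: "f \<in> Fclass m B" and m: "m \<ge> 1" and "y \<in> grid N" "x \<in> cell N y"
  shows "\<bar>f x - f y\<bar> \<le> B * real CARD('d) / real N"
proof -
  have "\<bar>f x - f y\<bar> \<le> B * (\<Sum>j\<in>UNIV. \<bar>x$j - y$j\<bar>)"
    using assms(3,4) cell_subset_cube[of y N] grid_subset_cube[of N]
    by (intro Fclass_abs_diff_le_coord_sum[OF f m]) auto
  also have "\<dots> \<le> B * (\<Sum>j\<in>(UNIV::'d set). 1 / real N)"
  proof (intro mult_left_mono sum_mono)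
    fix j
    have "y$j \<le> x$j" "x$j \<le> y$j + 1 / real N"
      using assms(4) by (auto simp: mem_cell_iff)
    then show "\<bar>x$j - y$j\<bar> \<le> 1 / real N"
      by linarith
  qed (use Fclass_bound_nonneg[OF f] in auto)
  finally show ?thesis
    by simp
qed

lemma abs_ln_riemann_sum_minus_logint_le:
  fixes f :: "real^'d \<Rightarrow> real"
  assumes cont: "continuous_on cube f" and N: "N \<ge> 1"
    and osc: "\<And>x y. y \<in> grid N \<Longrightarrow> x \<in> cell N y \<Longrightarrow> \<bar>f x - f y\<bar> \<le> \<tau>"
  shows "\<bar>ln (\<Sum>y\<in>grid N. (1 / real N)^CARD('d) * exp (f y)) - logint f\<bar> \<le> \<tau>"
proof -
  define R where "R = (\<Sum>y\<in>grid N. (1 / real N)^CARD('d) * exp (f y))"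
  have int: "(\<lambda>x. exp (f x)) integrable_on cube"
    using cont by (rule integrable_exp_on_cube)
  have int_cell: "(\<lambda>x. exp (f x)) integrable_on cell N y" if "y \<in> grid N" for y
    using integrable_on_subcbox[OF int[unfolded cube_def]] cell_subset_cube[OF that]
    unfolding cell_def cube_def by blast
  have integral_cell: "integral (cell N y) (\<lambda>_. exp c) = (1 / real N)^CARD('d) * exp c"
    for y :: "real^'d" and c
    using content_cell[OF N, of y] by (simp add: cell_def)
  have int_const: "(\<lambda>_. c) integrable_on cell N y" for y :: "real^'d" and c :: real
    unfolding cell_def by (rule integrable_const)
  have osc': "f x \<le> f y + \<tau>" "f y - \<tau> \<le> f x" if "y \<in> grid N" "x \<in> cell N y" for x y
    using osc[OF that] by auto
  have sum_cells: "integral cube (\<lambda>x. exp (f x)) = (\<Sum>y\<in>grid N. integral (cell N y) (\<lambda>x. exp (f x)))"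
    using integral_combine_division_topdown[OF int cells_division_of_cube[OF N]]
      sum.reindex[OF inj_on_cell[OF N]] by (simp add: comp_def)
  have "integral cube (\<lambda>x. exp (f x)) \<le> (\<Sum>y\<in>grid N. integral (cell N y) (\<lambda>_. exp (f y + \<tau>)))"
    unfolding sum_cells by (intro sum_mono integral_le int_cell int_const) (auto intro: osc')
  also have "\<dots> = exp \<tau> * R"
    by (simp add: integral_cell R_def sum_distrib_left exp_add mult_ac)
  finally have upper: "integral cube (\<lambda>x. exp (f x)) \<le> exp \<tau> * R" .
  have "exp (- \<tau>) * R = (\<Sum>y\<in>grid N. integral (cell N y) (\<lambda>_. exp (f y - \<tau>)))"
    by (simp add: integral_cell R_def sum_distrib_left exp_diff exp_minus field_simps)
  also have "\<dots> \<le> integral cube (\<lambda>x. exp (f x))"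
    unfolding sum_cells by (intro sum_mono integral_le int_cell int_const) (auto intro: osc')
  finally have lower: "exp (- \<tau>) * R \<le> integral cube (\<lambda>x. exp (f x))" .
  have "R > 0"
    unfolding R_def using N zero_in_grid[OF N] finite_grid by (intro sum_pos2) auto
  then have "ln (exp (- \<tau>) * R) \<le> logint f" "logint f \<le> ln (exp \<tau> * R)"
    using upper lower integral_exp_pos[OF cont] by (simp_all add: logint_def)
  then show ?thesis
    using \<open>R > 0\<close> by (simp add: ln_mult R_def abs_le_iff)
qed

section \<open>Sampling\<close>

(* A sample point of the randomized algorithm: k independent uniform draws from U, stored as a
   sequence that vanishes from index k on (the sample type nat => real of the statement). *)
definition draws :: "'a::zero set \<Rightarrow> nat \<Rightarrow> (nat \<Rightarrow> 'a) set" where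
  "draws U k = {w. (\<forall>i<k. w i \<in> U) \<and> (\<forall>i\<ge>k. w i = 0)}"

lemma draws_0: "draws U 0 = {\<lambda>_. 0}"
  by (auto simp: draws_def)

lemma draws_Suc: "draws U (Suc k) = (\<lambda>(w, x). w(k := x)) ` (draws U k \<times> U)"
proof (intro equalityI subsetI)
  fix w
  assume w: "w \<in> draws U (Suc k)"
  then have "(w(k := 0), w k) \<in> draws U k \<times> U"
    by (auto simp: draws_def)
  then show "w \<in> (\<lambda>(w, x). w(k := x)) ` (draws U k \<times> U)"
    by (intro image_eqI[of _ _ "(w(k := 0), w k)"]) auto
qed (auto simp: draws_def less_Suc_eq)

lemma inj_on_draws_Suc: "inj_on (\<lambda>(w, x). w(k := x)) (draws U k \<times> U)"
proof (rule inj_onI, clarsimp)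
  fix w x w' x'
  assume "w \<in> draws U k" "w' \<in> draws U k" "w(k := x) = w'(k := x')"
  then show "w = w' \<and> x = x'"
    by (auto simp: draws_def fun_eq_iff) (metis fun_upd_apply order_refl)+
qed

lemma finite_draws: "finite U \<Longrightarrow> finite (draws U k)"
  by (induction k) (auto simp: draws_0 draws_Suc)

lemma card_draws: "finite U \<Longrightarrow> card (draws U k) = card U ^ k"
  by (induction k) (simp_all add: draws_0 draws_Suc card_image[OF inj_on_draws_Suc] card_cartesian_product)

lemma draws_nonempty: "U \<noteq> {} \<Longrightarrow> draws U k \<noteq> {}"
  by (induction k) (auto simp: draws_0 draws_Suc)

lemma sum_draws_Suc:
  "(\<Sum>w\<in>draws U (Suc k). G w) = (\<Sum>w\<in>draws U k. \<Sum>x\<in>U. G (w(k := x)))"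
proof -
  have "(\<Sum>w\<in>draws U (Suc k). G w) = (\<Sum>p\<in>draws U k \<times> U. G ((\<lambda>(w, x). w(k := x)) p))"
    unfolding draws_Suc by (rule sum.reindex[OF inj_on_draws_Suc, unfolded comp_def])
  also have "\<dots> = (\<Sum>w\<in>draws U k. \<Sum>x\<in>U. G (w(k := x)))"
    by (subst sum.cartesian_product) (simp add: case_prod_beta)
  finally show ?thesis .
qed

lemma sum_draws_square_sum:
  fixes X :: "'a::zero \<Rightarrow> real"
  assumes U: "finite U" "U \<noteq> {}" and centered: "(\<Sum>x\<in>U. X x) = 0"
  shows "(\<Sum>w\<in>draws U k. (\<Sum>i<k. X (w i))^2) = real k * real (card U)^k * (\<Sum>x\<in>U. (X x)^2) / card U"
proof (induction k)
  case 0
  then show ?case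
    by (simp add: draws_0)
next
  case (Suc k)
  define V where "V = (\<Sum>x\<in>U. (X x)^2)"
  have "card U > 0"
    using U by (simp add: card_gt_0_iff)
  have inner: "(\<Sum>x\<in>U. (\<Sum>i<Suc k. X ((w(k := x)) i))^2) = real (card U) * (\<Sum>i<k. X (w i))^2 + V" for w
  proof -
    have "(\<Sum>x\<in>U. (\<Sum>i<Suc k. X ((w(k := x)) i))^2)
        = (\<Sum>x\<in>U. (\<Sum>i<k. X (w i))^2 + 2 * (\<Sum>i<k. X (w i)) * X x + (X x)^2)"
      by (simp add: power2_sum algebra_simps)
    also have "\<dots> = real (card U) * (\<Sum>i<k. X (w i))^2 + 2 * (\<Sum>i<k. X (w i)) * (\<Sum>x\<in>U. X x) + V"
      by (simp add: sum.distrib sum_distrib_left V_def)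
    finally show ?thesis
      using centered by simp
  qed
  have "(\<Sum>w\<in>draws U (Suc k). (\<Sum>i<Suc k. X (w i))^2)
      = (\<Sum>w\<in>draws U k. real (card U) * (\<Sum>i<k. X (w i))^2 + V)"
    by (subst sum_draws_Suc) (simp only: inner)
  also have "\<dots> = real (card U) * (real k * real (card U)^k * V / card U) + real (card U)^k * V"
    using Suc.IH by (simp add: sum.distrib sum_distrib_left[symmetric] card_draws[OF U(1)] V_def)
  also have "\<dots> = real (Suc k) * real (card U)^Suc k * V / card U"
    using \<open>card U > 0\<close> by (simp add: field_simps)
  finally show ?case
    by (simp add: V_def)
qed

lemma mean_abs_deviation_sample_mean_le:
  fixes Y :: "'a::zero \<Rightarrow> real"
  assumes U: "finite U" "U \<noteq> {}" and k: "k \<ge> 1"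
    and R: "\<And>x. x \<in> U \<Longrightarrow> \<bar>Y x - (\<Sum>u\<in>U. Y u) / card U\<bar> \<le> R"
  shows "(\<Sum>w\<in>draws U k. \<bar>(\<Sum>i<k. Y (w i)) / k - (\<Sum>u\<in>U. Y u) / card U\<bar>) / card (draws U k)
    \<le> R / sqrt k"
proof -
  define \<mu> where "\<mu> = (\<Sum>u\<in>U. Y u) / card U"
  define a where "a = (\<lambda>w. (\<Sum>i<k. Y (w i) - \<mu>) / k)"
  define n where "n = real (card (draws U k))"
  have "card U > 0" "real k > 0"
    using U k by (simp_all add: card_gt_0_iff)
  have n: "n = real (card U)^k" "n > 0"
    using U \<open>card U > 0\<close> by (simp_all add: n_def card_draws)
  have centered: "(\<Sum>x\<in>U. Y x - \<mu>) = 0"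
    using \<open>card U > 0\<close> by (simp add: sum_subtractf \<mu>_def)
  have "R \<ge> 0"
    using R U(2) by (meson abs_ge_zero all_not_in_conv order_trans)
  have "(\<Sum>x\<in>U. (Y x - \<mu>)^2) \<le> (\<Sum>x\<in>U. R^2)"
    using R unfolding \<mu>_def by (intro sum_mono) (metis abs_ge_zero power2_abs power_mono)
  then have "(\<Sum>x\<in>U. (Y x - \<mu>)^2) \<le> real (card U) * R^2"
    by simp
  then have var: "(\<Sum>x\<in>U. (Y x - \<mu>)^2) / card U \<le> R^2"
    using \<open>card U > 0\<close> by (simp add: field_simps)
  have "(\<Sum>w\<in>draws U k. (a w)^2) = (\<Sum>w\<in>draws U k. (\<Sum>i<k. Y (w i) - \<mu>)^2) / (real k)^2"
    unfolding a_def power_divide by (rule sum_divide_distrib[symmetric])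
  also have "\<dots> = real k * real (card U)^k * (\<Sum>x\<in>U. (Y x - \<mu>)^2) / card U / (real k)^2"
    unfolding sum_draws_square_sum[OF U centered] ..
  also have "\<dots> = n / k * ((\<Sum>x\<in>U. (Y x - \<mu>)^2) / card U)"
    using \<open>real k > 0\<close> by (simp add: n power2_eq_square)
  also have "\<dots> \<le> n / k * R^2"
    using var n \<open>real k > 0\<close> by (intro mult_left_mono) auto
  finally have "(\<Sum>w\<in>draws U k. \<bar>a w\<bar>^2) \<le> n / k * R^2"
    by simp
  then have "(\<Sum>w\<in>draws U k. \<bar>a w\<bar>^2) * n \<le> n / k * R^2 * n"
    using n by (intro mult_right_mono) auto
  with sum_squared_le_sum_of_squares[of "\<lambda>w. \<bar>a w\<bar>" "draws U k"]
  have "(\<Sum>w\<in>draws U k. \<bar>a w\<bar>)^2 \<le> n / k * R^2 * n"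
    unfolding n_def by linarith
  also have "\<dots> = (n * R / sqrt k)^2"
    using \<open>real k > 0\<close> by (simp add: power_mult_distrib power_divide power2_eq_square)
  finally have "(\<Sum>w\<in>draws U k. \<bar>a w\<bar>) \<le> n * R / sqrt k"
    by (rule power2_le_imp_le) (use n \<open>R \<ge> 0\<close> in simp)
  then have "(\<Sum>w\<in>draws U k. \<bar>a w\<bar>) / n \<le> R / sqrt k"
    using n(2) by (simp add: pos_divide_le_eq mult_ac)
  moreover have "(\<Sum>i<k. Y (w i)) / k - \<mu> = a w" for w
    using \<open>real k > 0\<close> by (simp add: a_def sum_subtractf diff_divide_distrib)
  ultimately show ?thesis
    by (simp add: \<mu>_def n_def)
qed

definition inv_cdf_index :: "nat \<Rightarrow> (nat \<Rightarrow> real) \<Rightarrow> real \<Rightarrow> nat" where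
  "inv_cdf_index N a v = card {i \<in> {1..<N}. sum a {..<i} \<le> v}"

lemma inv_cdf_index_less: "N \<ge> 1 \<Longrightarrow> inv_cdf_index N a v < N"
proof -
  assume "N \<ge> 1"
  have "inv_cdf_index N a v \<le> card {1..<N}"
    unfolding inv_cdf_index_def by (rule card_mono) auto
  with \<open>N \<ge> 1\<close> show ?thesis
    by simp
qed

lemma partial_sum_mono:
  fixes a :: "nat \<Rightarrow> real"
  assumes "\<And>j. j < N \<Longrightarrow> a j \<ge> 0" "i \<le> i'" "i' \<le> N"
  shows "sum a {..<i} \<le> sum a {..<i'}"
  using assms by (intro sum_mono2) auto

lemma inv_cdf_index_eqI:
  fixes a :: "nat \<Rightarrow> real"
  assumes a: "\<And>j. j < N \<Longrightarrow> a j \<ge> 0" and i: "i < N"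
    and v: "sum a {..<i} \<le> v" "v < sum a {..<Suc i}"
  shows "inv_cdf_index N a v = i"
proof -
  have "i' \<le> i" if "i' < N" "sum a {..<i'} \<le> v" for i'
  proof (rule ccontr)
    assume "\<not> i' \<le> i"
    then have "sum a {..<Suc i} \<le> sum a {..<i'}"
      by (intro partial_sum_mono[of N a, OF a]) (use that in auto)
    then show False
      using that v by linarith
  qed
  moreover have "sum a {..<i'} \<le> v" if "i' \<le> i" for i'
  proof -
    have "sum a {..<i'} \<le> sum a {..<i}"
      using a that i by (intro partial_sum_mono[where N = N]) auto
    with v show ?thesis
      by linarith
  qed
  ultimately have "{i' \<in> {1..<N}. sum a {..<i'} \<le> v} = {1..i}"
    using i by fastforce
  then show ?thesis
    by (simp add: inv_cdf_index_def)
qed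

lemma inv_cdf_index_eq_iff:
  fixes a :: "nat \<Rightarrow> real"
  assumes a: "\<And>j. j < N \<Longrightarrow> a j \<ge> 0" and v: "0 \<le> v" "v < sum a {..<N}" and i: "i < N"
  shows "inv_cdf_index N a v = i \<longleftrightarrow> sum a {..<i} \<le> v \<and> v < sum a {..<Suc i}"
proof
  assume idx: "inv_cdf_index N a v = i"
  define I where "I = {i. i < N \<and> sum a {..<i} \<le> v}"
  have "0 \<in> I" "finite I"
    using i v by (auto simp: I_def)
  define i0 where "i0 = Max I"
  have "i0 \<in> I"
    unfolding i0_def using \<open>finite I\<close> \<open>0 \<in> I\<close> by (intro Max_in) auto
  then have i0: "i0 < N" "sum a {..<i0} \<le> v"
    by (simp_all add: I_def)
  have "v < sum a {..<Suc i0}"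
  proof (cases "Suc i0 < N")
    case True
    then have "Suc i0 \<notin> I"
      using Max_ge[OF \<open>finite I\<close>, of "Suc i0"] by (auto simp: i0_def)
    then show ?thesis
      using True by (auto simp: I_def)
  next
    case False
    then have "Suc i0 = N"
      using i0 by simp
    then show ?thesis
      using v by simp
  qed
  with i0 idx show "sum a {..<i} \<le> v \<and> v < sum a {..<Suc i}"
    using inv_cdf_index_eqI[of N a, OF a] by blast
qed (use inv_cdf_index_eqI[of N a, OF a i] in blast)

lemma card_midpoints_between:
  fixes \<alpha> \<beta> :: real
  assumes "0 \<le> \<alpha>" "\<alpha> \<le> \<beta>"
  shows "\<bar>real (card {u::nat. \<alpha> \<le> real u + 1/2 \<and> real u + 1/2 < \<beta>}) - (\<beta> - \<alpha>)\<bar> \<le> 1"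
proof -
  define p where "p = nat \<lceil>\<alpha> - 1/2\<rceil>"
  define q where "q = nat \<lceil>\<beta> - 1/2\<rceil>"
  have p: "real p = of_int \<lceil>\<alpha> - 1/2\<rceil>" and q: "real q = of_int \<lceil>\<beta> - 1/2\<rceil>"
    using assms unfolding p_def q_def by linarith+
  have "{u::nat. \<alpha> \<le> real u + 1/2 \<and> real u + 1/2 < \<beta>} = {p..<q}"
  proof (intro equalityI subsetI)
    fix u
    assume "u \<in> {u::nat. \<alpha> \<le> real u + 1/2 \<and> real u + 1/2 < \<beta>}"
    then show "u \<in> {p..<q}"
      unfolding p_def q_def by simp linarith
  next
    fix u
    assume "u \<in> {p..<q}"
    then show "u \<in> {u::nat. \<alpha> \<le> real u + 1/2 \<and> real u + 1/2 < \<beta>}"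
      unfolding p_def q_def using assms by simp linarith
  qed
  moreover have "p \<le> q"
    unfolding p_def q_def using assms by (intro nat_mono ceiling_mono) auto
  ultimately show ?thesis
    using p q by (simp add: of_nat_diff) linarith
qed

lemma card_stratified_inverse_cdf_preimage:
  fixes a :: "nat \<Rightarrow> real"
  assumes NU: "NU \<ge> 1" and a: "\<And>j. j < N \<Longrightarrow> a j \<ge> 0" and A: "sum a {..<N} > 0" and i: "i < N"
  shows "\<bar>real (card {u \<in> {..<NU}. inv_cdf_index N a ((real u + 1/2) * sum a {..<N} / NU) = i})
           - a i * NU / sum a {..<N}\<bar> \<le> 1"
proof -
  define A where "A = sum a {..<N}"
  define \<alpha> where "\<alpha> = sum a {..<i} * NU / A"
  define \<beta> where "\<beta> = sum a {..<Suc i} * NU / A"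
  have "real NU > 0" "A > 0"
    using NU A by (simp_all add: A_def)
  have "0 \<le> sum a {..<i}" "sum a {..<Suc i} \<le> A"
    using i a partial_sum_mono[of N a, OF a, of 0 i] partial_sum_mono[of N a, OF a, of "Suc i" N]
    by (simp_all add: A_def)
  then have "sum a {..<Suc i} * NU \<le> A * NU"
    by (intro mult_right_mono) auto
  then have \<alpha>\<beta>: "0 \<le> \<alpha>" "\<alpha> \<le> \<beta>" "\<beta> \<le> NU" "\<beta> - \<alpha> = a i * NU / A"
    using \<open>A > 0\<close> \<open>real NU > 0\<close> a[OF i] \<open>0 \<le> sum a {..<i}\<close>
    by (auto simp: \<alpha>_def \<beta>_def field_simps)
  have "inv_cdf_index N a ((real u + 1/2) * A / NU) = i \<longleftrightarrow> \<alpha> \<le> real u + 1/2 \<and> real u + 1/2 < \<beta>"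
    if "u < NU" for u
  proof -
    have "real u + 1/2 < real NU"
      using that by linarith
    then have "(real u + 1/2) * A < real NU * A"
      using \<open>A > 0\<close> by (intro mult_strict_right_mono)
    then have "0 \<le> (real u + 1/2) * A / NU" "(real u + 1/2) * A / NU < A"
      using \<open>A > 0\<close> \<open>real NU > 0\<close> by (simp_all add: pos_divide_less_eq mult.commute)
    then show ?thesis
      using inv_cdf_index_eq_iff[of N a, OF a _ _ i] \<open>A > 0\<close> \<open>real NU > 0\<close>
      by (simp add: A_def \<alpha>_def \<beta>_def field_simps)
  qed
  moreover have "u < NU" if "real u + 1/2 < \<beta>" for u
    using that \<alpha>\<beta>(3) by linarith
  ultimately have "{u \<in> {..<NU}. inv_cdf_index N a ((real u + 1/2) * A / NU) = i}
      = {u::nat. \<alpha> \<le> real u + 1/2 \<and> real u + 1/2 < \<beta>}"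
    by blast
  then show ?thesis
    using card_midpoints_between[OF \<alpha>\<beta>(1,2)] \<alpha>\<beta>(4) by (simp add: A_def)
qed

lemma stratified_inverse_cdf_mean_error:
  fixes a w :: "nat \<Rightarrow> real"
  assumes N: "N \<ge> 1" and NU: "NU \<ge> 1"
    and a: "\<And>j. j < N \<Longrightarrow> a j > 0" and w: "\<And>j. j < N \<Longrightarrow> \<bar>w j\<bar> \<le> W"
  shows "\<bar>(\<Sum>u<NU. w (inv_cdf_index N a ((real u + 1/2) * sum a {..<N} / NU))) / NU
           - (\<Sum>j<N. a j * w j) / sum a {..<N}\<bar> \<le> real N * W / NU"
proof -
  define A where "A = sum a {..<N}"
  have "A > 0"
    unfolding A_def using N a by (intro sum_pos) (auto simp: lessThan_empty_iff)
  have "real NU > 0"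
    using NU by simp
  define idx where "idx u = inv_cdf_index N a ((real u + 1/2) * A / NU)" for u :: nat
  define cnt where "cnt i = card {u \<in> {..<NU}. idx u = i}" for i
  have "(\<Sum>u<NU. w (idx u)) = (\<Sum>i<N. \<Sum>u\<in>{u \<in> {..<NU}. idx u = i}. w (idx u))"
    using inv_cdf_index_less[OF N] by (intro sum.group[symmetric]) (auto simp: idx_def)
  also have "\<dots> = (\<Sum>i<N. real (cnt i) * w i)"
    by (simp add: cnt_def)
  finally have group: "(\<Sum>u<NU. w (idx u)) = (\<Sum>i<N. real (cnt i) * w i)" .
  have cnt: "\<bar>real (cnt i) - a i * NU / A\<bar> \<le> 1" if "i < N" for i
    unfolding cnt_def idx_def A_def using NU a \<open>A > 0\<close> that
    by (intro card_stratified_inverse_cdf_preimage) (auto simp: A_def less_imp_le)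
  have "(\<Sum>i<N. (real (cnt i) - a i * NU / A) * w i) / NU
      = (\<Sum>i<N. real (cnt i) * w i / NU - a i * w i / A)"
    unfolding sum_divide_distrib using \<open>A > 0\<close> \<open>real NU > 0\<close>
    by (intro sum.cong) (auto simp: field_simps)
  then have "(\<Sum>u<NU. w (idx u)) / NU - (\<Sum>j<N. a j * w j) / A
      = (\<Sum>i<N. (real (cnt i) - a i * NU / A) * w i) / NU"
    by (simp add: group sum_subtractf sum_divide_distrib)
  also have "\<bar>\<dots>\<bar> \<le> (\<Sum>i<N. \<bar>real (cnt i) - a i * NU / A\<bar> * \<bar>w i\<bar>) / NU"
    unfolding abs_divide abs_of_nat abs_mult[symmetric] using \<open>real NU > 0\<close>
    by (intro divide_right_mono sum_abs) auto
  also have "\<dots> \<le> (\<Sum>i<N. 1 * W) / NU"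
    using cnt w \<open>real NU > 0\<close> by (intro divide_right_mono sum_mono mult_mono) auto
  finally show ?thesis
    by (simp add: idx_def A_def)
qed

lemma abs_ln_diff_le:
  fixes x y :: real
  assumes "0 < c" "c \<le> x" "c \<le> y"
  shows "\<bar>ln x - ln y\<bar> \<le> \<bar>x - y\<bar> / c"
proof -
  have "ln u - ln v \<le> \<bar>u - v\<bar> / c" if "c \<le> u" "c \<le> v" for u v
  proof -
    have "0 < u" "0 < v"
      using that assms(1) by linarith+
    then have "ln u - ln v = ln (u / v)"
      by (simp add: ln_div)
    also have "\<dots> \<le> u / v - 1"
      using \<open>0 < u\<close> \<open>0 < v\<close> by (intro ln_le_minus_one) simp
    also have "\<dots> = (u - v) / v"
      using \<open>0 < v\<close> by (simp add: diff_divide_distrib)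
    also have "\<dots> \<le> \<bar>u - v\<bar> / v"
      using \<open>0 < v\<close> by (intro divide_right_mono) auto
    also have "\<dots> \<le> \<bar>u - v\<bar> / c"
      using that assms(1) by (intro divide_left_mono) auto
    finally show ?thesis .
  qed
  from this[of x y] this[of y x] assms show ?thesis
    by (simp add: abs_minus_commute)
qed

lemma weighted_mean_bounds:
  fixes a Y :: "'a \<Rightarrow> real"
  assumes "finite S" "S \<noteq> {}" and a: "\<And>x. x \<in> S \<Longrightarrow> a x > 0"
    and bounds: "\<And>x. x \<in> S \<Longrightarrow> lo \<le> Y x \<and> Y x \<le> hi"
  shows "lo \<le> (\<Sum>x\<in>S. a x * Y x) / sum a S \<and> (\<Sum>x\<in>S. a x * Y x) / sum a S \<le> hi"
proof -
  have "sum a S > 0"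
    using assms by (intro sum_pos) auto
  have "(\<Sum>x\<in>S. a x * lo) \<le> (\<Sum>x\<in>S. a x * Y x)" "(\<Sum>x\<in>S. a x * Y x) \<le> (\<Sum>x\<in>S. a x * hi)"
    using a bounds by (intro sum_mono mult_left_mono; force)+
  then have "sum a S * lo \<le> (\<Sum>x\<in>S. a x * Y x)" "(\<Sum>x\<in>S. a x * Y x) \<le> sum a S * hi"
    by (simp_all add: sum_distrib_right)
  with \<open>sum a S > 0\<close> show ?thesis
    by (simp add: pos_le_divide_eq pos_divide_le_eq mult.commute)
qed

lemma mean_bounds:
  fixes Y :: "'a \<Rightarrow> real"
  assumes "finite S" "S \<noteq> {}" "\<And>x. x \<in> S \<Longrightarrow> lo \<le> Y x \<and> Y x \<le> hi"
  shows "lo \<le> (\<Sum>x\<in>S. Y x) / card S \<and> (\<Sum>x\<in>S. Y x) / card S \<le> hi"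
  using weighted_mean_bounds[of S "\<lambda>_. 1" lo Y hi] assms by simp

lemma mean_abs_ln_diff_le:
  fixes Z :: "'a \<Rightarrow> real"
  assumes "finite \<Omega>" "\<Omega> \<noteq> {}" "\<And>\<omega>. exp (- E) \<le> Z \<omega>" "exp (- E) \<le> W"
  shows "(\<Sum>\<omega>\<in>\<Omega>. \<bar>ln (Z \<omega>) - ln W\<bar>) / card \<Omega>
    \<le> exp E * ((\<Sum>\<omega>\<in>\<Omega>. \<bar>Z \<omega> - W'\<bar>) / card \<Omega> + \<bar>W' - W\<bar>)"
proof -
  have "\<bar>ln (Z \<omega>) - ln W\<bar> \<le> exp E * (\<bar>Z \<omega> - W'\<bar> + \<bar>W' - W\<bar>)" for \<omega>
  proof -
    have "\<bar>ln (Z \<omega>) - ln W\<bar> \<le> \<bar>Z \<omega> - W\<bar> / exp (- E)"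
      using assms(3,4) by (intro abs_ln_diff_le) auto
    also have "\<dots> \<le> exp E * (\<bar>Z \<omega> - W'\<bar> + \<bar>W' - W\<bar>)"
      by (simp add: exp_minus divide_inverse mult.commute mult_left_mono)
    finally show ?thesis .
  qed
  moreover have "card \<Omega> > 0"
    using assms(1,2) by (simp add: card_gt_0_iff)
  ultimately have "(\<Sum>\<omega>\<in>\<Omega>. \<bar>ln (Z \<omega>) - ln W\<bar>) / card \<Omega>
      \<le> (\<Sum>\<omega>\<in>\<Omega>. exp E * (\<bar>Z \<omega> - W'\<bar> + \<bar>W' - W\<bar>)) / card \<Omega>"
    by (intro divide_right_mono sum_mono) auto
  also have "\<dots> = exp E * ((\<Sum>\<omega>\<in>\<Omega>. \<bar>Z \<omega> - W'\<bar>) / card \<Omega> + \<bar>W' - W\<bar>)"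
    using \<open>card \<Omega> > 0\<close>
    by (simp add: sum_distrib_left[symmetric] sum.distrib add_divide_distrib) (simp add: field_simps)
  finally show ?thesis .
qed

lemma importance_sampling_ln_error:
  fixes a w :: "nat \<Rightarrow> real"
  assumes N: "N \<ge> 1" and NU: "NU \<ge> 1" and k: "k \<ge> 1"
    and a: "\<And>j. j < N \<Longrightarrow> a j > 0" and w: "\<And>j. j < N \<Longrightarrow> exp (- E) \<le> w j \<and> w j \<le> exp E"
  defines "U \<equiv> real ` {..<NU}"
    and "idx \<equiv> \<lambda>x. inv_cdf_index N a ((x + 1/2) * sum a {..<N} / NU)"
  shows "(\<Sum>\<omega>\<in>draws U k. \<bar>ln ((\<Sum>i<k. w (idx (\<omega> i))) / k)
            - ln ((\<Sum>j<N. a j * w j) / sum a {..<N})\<bar>) / card (draws U k)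
    \<le> exp E * ((exp E - exp (- E)) / sqrt k + real N * exp E / NU)"
proof -
  define Y where "Y x = w (idx x)" for x
  define W where "W = (\<Sum>j<N. a j * w j) / sum a {..<N}"
  define W' where "W' = (\<Sum>x\<in>U. Y x) / card U"
  define Z where "Z \<omega> = (\<Sum>i<k. Y (\<omega> i)) / k" for \<omega> :: "nat \<Rightarrow> real"
  have U: "finite U" "U \<noteq> {}" "card U = NU"
    using NU by (auto simp: U_def card_image lessThan_empty_iff)
  have Y: "exp (- E) \<le> Y x \<and> Y x \<le> exp E" for x
    using w inv_cdf_index_less[OF N] by (simp add: Y_def idx_def)
  have W': "exp (- E) \<le> W' \<and> W' \<le> exp E"
    unfolding W'_def using U Y by (intro mean_bounds) auto
  have W: "exp (- E) \<le> W"
    unfolding W_def using N a w by (intro weighted_mean_bounds[THEN conjunct1]) (auto simp: lessThan_empty_iff)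
  have Z: "exp (- E) \<le> Z \<omega>" for \<omega>
    using mean_bounds[of "{..<k}" "exp (- E)" "\<lambda>i. Y (\<omega> i)" "exp E"] k Y
    by (auto simp: Z_def lessThan_empty_iff)
  have sample: "(\<Sum>\<omega>\<in>draws U k. \<bar>Z \<omega> - W'\<bar>) / card (draws U k) \<le> (exp E - exp (- E)) / sqrt k"
  proof -
    have "\<bar>Y x - (\<Sum>u\<in>U. Y u) / card U\<bar> \<le> exp E - exp (- E)" for x
      using Y[of x] W' unfolding W'_def abs_le_iff by linarith
    then show ?thesis
      unfolding Z_def W'_def using U by (intro mean_abs_deviation_sample_mean_le k) auto
  qed
  have "\<bar>w j\<bar> \<le> exp E" if "j < N" for j
    using w[OF that] exp_gt_zero[of "- E"] unfolding abs_le_iff by linarith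
  then have "\<bar>(\<Sum>u<NU. Y (real u)) / NU - W\<bar> \<le> real N * exp E / NU"
    unfolding W_def Y_def idx_def using N NU a by (intro stratified_inverse_cdf_mean_error) auto
  moreover have "W' = (\<Sum>u<NU. Y (real u)) / NU"
    unfolding W'_def U(3) unfolding U_def by (simp add: sum.reindex)
  ultimately have bias: "\<bar>W' - W\<bar> \<le> real N * exp E / NU"
    by simp
  have "(\<Sum>\<omega>\<in>draws U k. \<bar>ln (Z \<omega>) - ln W\<bar>) / card (draws U k)
      \<le> exp E * ((\<Sum>\<omega>\<in>draws U k. \<bar>Z \<omega> - W'\<bar>) / card (draws U k) + \<bar>W' - W\<bar>)"
    using U Z W by (intro mean_abs_ln_diff_le finite_draws draws_nonempty) auto
  also have "\<dots> \<le> exp E * ((exp E - exp (- E)) / sqrt k + real N * exp E / NU)"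
    using sample bias by (intro mult_left_mono add_mono) auto
  finally show ?thesis
    by (simp add: Z_def Y_def W_def)
qed

section \<open>The randomized algorithm\<close>

(* Some function of the class consistent with the first-phase data (an arbitrary function if
   there is none, which never happens for data coming from the class). *)
definition ref_fun :: "nat \<Rightarrow> real \<Rightarrow> (real^'d) list \<Rightarrow> real list \<Rightarrow> real^'d \<Rightarrow> real" where
  "ref_fun m B xs ys = (SOME h. h \<in> consistent m B xs ys)"

definition weights :: "(real^'d) list \<Rightarrow> (real^'d \<Rightarrow> real) \<Rightarrow> nat \<Rightarrow> real" where
  "weights zs g j = exp (g (zs ! j))"

definition sample_index :: "(real^'d) list \<Rightarrow> (real^'d \<Rightarrow> real) \<Rightarrow> nat \<Rightarrow> real \<Rightarrow> nat" where
  "sample_index zs g NU x =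
     inv_cdf_index (length zs) (weights zs g) ((x + 1/2) * sum (weights zs g) {..<length zs} / NU)"

definition rand_query ::
  "nat \<Rightarrow> real \<Rightarrow> (real^'d) list \<Rightarrow> nat \<Rightarrow> nat \<Rightarrow> nat \<Rightarrow> (nat \<Rightarrow> real) \<Rightarrow> real list \<Rightarrow> real^'d" where
  "rand_query m B xs N NU k \<omega> ys =
     (if length ys < length xs then xs ! length ys
      else if length ys < length xs + k then
        enum_list (grid N) ! sample_index (enum_list (grid N)) (ref_fun m B xs ys) NU (\<omega> (length ys - length xs))
      else 0)"

(* The logarithm of an importance-sampling estimate of the Riemann sum of e^f over grid N:
   total e^g weight of the fine grid times the sample mean of e^(f - g). *)
definition rand_estimate ::
  "nat \<Rightarrow> real \<Rightarrow> (real^'d) list \<Rightarrow> nat \<Rightarrow> nat \<Rightarrow> nat \<Rightarrow> (nat \<Rightarrow> real) \<Rightarrow> real list \<Rightarrow> real" where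
  "rand_estimate m B xs N NU k \<omega> ys =
     (let zs = enum_list (grid N); g = ref_fun m B xs ys in
      ln ((1 / real N)^CARD('d) * sum (weights zs g) {..<length zs})
      + ln ((\<Sum>i<k. exp (ys ! (length xs + i) - g (zs ! sample_index zs g NU (\<omega> i)))) / k))"

lemma ref_fun_take: "ref_fun m B xs (take (length xs) ys) = ref_fun m B xs ys"
  by (simp add: ref_fun_def consistent_def)

lemma ref_fun_consistent:
  assumes "f \<in> consistent m B xs ys"
  shows "ref_fun m B xs ys \<in> consistent m B xs ys"
  unfolding ref_fun_def using assms by (rule someI[where P = "\<lambda>h. h \<in> consistent m B xs ys"])

lemma rand_query_in_cube:
  fixes xs :: "(real^'d) list"
  assumes "set xs \<subseteq> cube" "N \<ge> 1"
  shows "rand_query m B xs N NU k \<omega> ys \<in> cube"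
proof -
  let ?zs = "enum_list (grid N) :: (real^'d) list"
  have set_zs: "set ?zs = grid N"
    by (simp add: set_enum_list finite_grid)
  have "(0::real^'d) \<in> grid N"
    using assms(2) by (rule zero_in_grid)
  then have "?zs \<noteq> []"
    using set_zs by auto
  then have "sample_index ?zs g NU x < length ?zs" for g x
    unfolding sample_index_def by (intro inv_cdf_index_less) (simp add: Suc_le_eq)
  moreover have "?zs ! i \<in> cube" if "i < length ?zs" for i
    using that set_zs grid_subset_cube nth_mem by blast
  moreover have "xs ! j \<in> cube" if "j < length xs" for j
    using assms(1) nth_mem that by blast
  moreover have "(0::real^'d) \<in> cube"
    by (simp add: mem_cube_iff)
  ultimately show ?thesis
    by (simp add: rand_query_def)
qed

lemma info_rand_query:
  fixes f :: "real^'d \<Rightarrow> real" and m N NU k :: nat and B :: real and \<omega> :: "nat \<Rightarrow> real"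
  assumes "length xs + k \<le> n"
  defines "Y \<equiv> info (rand_query m B xs N NU k \<omega>) f n"
    and "g \<equiv> ref_fun m B xs (map f xs)"
  shows "take (length xs) Y = map f xs"
    and "\<And>i. i < k \<Longrightarrow> Y ! (length xs + i) =
           f (enum_list (grid N) ! sample_index (enum_list (grid N)) g NU (\<omega> i))"
proof -
  have prefix: "take (length xs) (info (rand_query m B xs N NU k \<omega>) f j) = map f xs"
    if "length xs \<le> j" for j
  proof -
    have "info (rand_query m B xs N NU k \<omega>) f (length xs) = info (query_list xs) f (length xs)"
      by (rule info_cong) (simp add: rand_query_def query_list_def)
    then show ?thesis
      using that by (simp add: take_info info_query_list)
  qed
  show "take (length xs) Y = map f xs"
    unfolding Y_def using assms(1) by (intro prefix) simp
  fix i
  assume "i < k"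
  define Z where "Z = info (rand_query m B xs N NU k \<omega>) f (length xs + i)"
  have "ref_fun m B xs Z = g"
    using prefix[of "length xs + i"] ref_fun_take[of m B xs Z] by (simp add: Z_def g_def)
  moreover have "length Z = length xs + i"
    by (simp add: Z_def)
  ultimately show "Y ! (length xs + i) = f (enum_list (grid N) ! sample_index (enum_list (grid N)) g NU (\<omega> i))"
    using \<open>i < k\<close> assms(1) by (simp add: Y_def nth_info Z_def[symmetric] rand_query_def)
qed

lemma sum_nth_distinct:
  assumes "distinct xs"
  shows "(\<Sum>j<length xs. h (xs ! j)) = (\<Sum>y\<in>set xs. h y)"
proof -
  have "set xs = (!) xs ` {..<length xs}"
    by (auto simp: in_set_conv_nth)
  moreover have "inj_on ((!) xs) {..<length xs}"
    using assms by (simp add: inj_on_nth)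
  ultimately show ?thesis
    by (simp add: sum.reindex)
qed

lemma abs_logint_minus_rand_estimate_le:
  fixes f :: "real^'d \<Rightarrow> real" and xs :: "(real^'d) list"
    and m N NU k :: nat and B :: real and \<omega> :: "nat \<Rightarrow> real"
  assumes f: "f \<in> Fclass m B" and m: "m \<ge> 1" and N: "N \<ge> 1" and len: "length xs + k \<le> n"
  defines "zs \<equiv> enum_list (grid N) :: (real^'d) list"
    and "g \<equiv> ref_fun m B xs (map f xs)"
  defines "a \<equiv> weights zs g" and "w \<equiv> \<lambda>j. exp (f (zs ! j) - g (zs ! j))"
  shows "\<bar>logint f - rand_estimate m B xs N NU k \<omega> (info (rand_query m B xs N NU k \<omega>) f n)\<bar>
    \<le> B * real CARD('d) / real N
       + \<bar>ln ((\<Sum>i<k. w (sample_index zs g NU (\<omega> i))) / k)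
          - ln ((\<Sum>j<length zs. a j * w j) / sum a {..<length zs})\<bar>"
proof -
  define Y where "Y = info (rand_query m B xs N NU k \<omega>) f n"
  define vol where "vol = (1 / real N)^CARD('d)"
  have "vol > 0"
    using N by (simp add: vol_def)
  have zs: "set zs = grid N" "distinct zs"
    by (simp_all add: zs_def set_enum_list distinct_enum_list finite_grid)
  then have "zs \<noteq> []"
    using zero_in_grid[OF N] by (metis empty_iff empty_set)
  have "ref_fun m B xs Y = g"
    using info_rand_query(1)[OF len] ref_fun_take[of m B xs Y] by (simp add: Y_def g_def)
  then have estimate: "rand_estimate m B xs N NU k \<omega> Y
      = ln (vol * sum a {..<length zs}) + ln ((\<Sum>i<k. w (sample_index zs g NU (\<omega> i))) / k)"
    using info_rand_query(2)[OF len]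
    by (simp add: rand_estimate_def Y_def zs_def a_def w_def vol_def Let_def g_def[symmetric])
  have "sum a {..<length zs} > 0" "(\<Sum>j<length zs. a j * w j) > 0"
    using \<open>zs \<noteq> []\<close> by (auto simp: a_def w_def weights_def intro!: sum_pos)
  then have "ln (vol * sum a {..<length zs}) + ln ((\<Sum>j<length zs. a j * w j) / sum a {..<length zs})
      = ln (vol * sum a {..<length zs} * ((\<Sum>j<length zs. a j * w j) / sum a {..<length zs}))"
    using \<open>vol > 0\<close> by (intro ln_mult_pos[symmetric]) auto
  also have "\<dots> = ln (vol * (\<Sum>j<length zs. a j * w j))"
    using \<open>sum a {..<length zs} > 0\<close> by simp
  also have "ln (vol * (\<Sum>j<length zs. a j * w j)) = ln (\<Sum>y\<in>grid N. vol * exp (f y))"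
    using sum_nth_distinct[OF zs(2), of "\<lambda>y. exp (f y)"] zs(1)
    by (simp add: a_def w_def weights_def sum_distrib_left[symmetric] flip: exp_add)
  finally have riemann: "ln (vol * sum a {..<length zs}) + ln ((\<Sum>j<length zs. a j * w j) / sum a {..<length zs})
      = ln (\<Sum>y\<in>grid N. vol * exp (f y))" .
  have "\<bar>ln (\<Sum>y\<in>grid N. vol * exp (f y)) - logint f\<bar> \<le> B * real CARD('d) / real N"
    unfolding vol_def using Fclass_continuous_on[OF f] N Fclass_abs_diff_le_on_cell[OF f m]
    by (intro abs_ln_riemann_sum_minus_logint_le)
  then show ?thesis
    unfolding Y_def[symmetric] estimate using riemann by linarith
qed

lemma rand_estimate_mean_error:
  fixes f :: "real^'d \<Rightarrow> real" and xs :: "(real^'d) list"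
  assumes f: "f \<in> Fclass m B" and m: "m \<ge> 1" and K: "K \<ge> 1"
    and N: "N \<ge> 1" and NU: "NU \<ge> 1" and k: "k \<ge> 1"
    and xs: "set xs = grid (K * 2^m)" and len: "length xs + k \<le> n"
  defines "E \<equiv> interp_const m CARD('d) * B * (1 / real K)^m"
    and "\<Omega> \<equiv> draws (real ` {..<NU}) k"
  shows "(\<Sum>\<omega>\<in>\<Omega>. \<bar>logint f - rand_estimate m B xs N NU k \<omega> (info (rand_query m B xs N NU k \<omega>) f n)\<bar>)
      / card \<Omega>
    \<le> B * real CARD('d) / real N
      + exp E * ((exp E - exp (- E)) / sqrt k + real (card (grid N :: (real^'d) set)) * exp E / NU)"
proof -
  define zs :: "(real^'d) list" where "zs = enum_list (grid N)"
  define g where "g = ref_fun m B xs (map f xs)"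
  define a where "a = weights zs g"
  define w where "w j = exp (f (zs ! j) - g (zs ! j))" for j
  define err where "err \<omega> = \<bar>ln ((\<Sum>i<k. w (sample_index zs g NU (\<omega> i))) / k)
      - ln ((\<Sum>j<length zs. a j * w j) / sum a {..<length zs})\<bar>" for \<omega>
  have zs: "set zs = grid N" "length zs = card (grid N :: (real^'d) set)"
    by (simp_all add: zs_def set_enum_list length_enum_list finite_grid)
  moreover have "(0::real^'d) \<in> grid N"
    using N by (rule zero_in_grid)
  ultimately have "length zs \<ge> 1"
    by (cases zs) auto
  have "f \<in> consistent m B xs (map f xs)"
    using f by (simp add: consistent_def)
  then have "\<bar>g x - f x\<bar> \<le> E" if "x \<in> cube" for x
    unfolding g_def E_def using that ref_fun_consistent by (intro consistent_close[OF xs K])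
  then have "exp (- E) \<le> w j \<and> w j \<le> exp E" if "j < length zs" for j
    using that zs(1) grid_subset_cube nth_mem by (force simp: w_def abs_le_iff)
  moreover have "a j > 0" for j
    by (simp add: a_def weights_def)
  ultimately have sampling: "(\<Sum>\<omega>\<in>\<Omega>. err \<omega>) / card \<Omega>
      \<le> exp E * ((exp E - exp (- E)) / sqrt k + real (length zs) * exp E / NU)"
    unfolding \<Omega>_def err_def sample_index_def a_def[symmetric]
    using \<open>length zs \<ge> 1\<close> NU k by (intro importance_sampling_ln_error) auto
  have "card \<Omega> > 0"
    using NU by (simp add: \<Omega>_def card_gt_0_iff finite_draws draws_nonempty lessThan_empty_iff)
  have "(\<Sum>\<omega>\<in>\<Omega>. \<bar>logint f - rand_estimate m B xs N NU k \<omega> (info (rand_query m B xs N NU k \<omega>) f n)\<bar>)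
      \<le> (\<Sum>\<omega>\<in>\<Omega>. B * real CARD('d) / real N + err \<omega>)"
    unfolding err_def zs_def g_def a_def w_def
    by (intro sum_mono abs_logint_minus_rand_estimate_le[OF f m N len])
  also have "\<dots> = card \<Omega> * (B * real CARD('d) / real N) + (\<Sum>\<omega>\<in>\<Omega>. err \<omega>)"
    by (simp add: sum.distrib)
  finally show ?thesis
    using sampling \<open>card \<Omega> > 0\<close> zs(2) by (simp add: divide_le_eq add_divide_distrib field_simps)
qed

lemma exp_minus_exp_neg_le: "0 \<le> E \<Longrightarrow> exp E - exp (- E) \<le> 2 * E * exp (E::real)"
proof -
  assume "0 \<le> E"
  have "exp E * (1 - exp (- 2 * E)) \<le> exp E * (2 * E)"
    using exp_ge_add_one_self[of "- 2 * E"] by (intro mult_left_mono) auto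
  moreover have "exp E * exp (- 2 * E) = exp (- E)"
    by (simp flip: exp_add)
  ultimately show ?thesis
    by (simp add: algebra_simps)
qed

lemma error_terms_le_exp_rate:
  fixes E x y r s c a :: real
  assumes "0 \<le> E" "0 \<le> c" "0 \<le> r" "0 < s" "x \<le> r" "y \<le> r" "E / s \<le> c * r" "E \<le> c * a"
  shows "x + exp E * ((exp E - exp (- E)) / s + y * exp E) \<le> (2 + 2 * c) * exp (2 * c * a) * r"
proof -
  have "(exp E - exp (- E)) / s \<le> 2 * E * exp E / s"
    using exp_minus_exp_neg_le[OF assms(1)] assms(4) by (simp add: divide_right_mono)
  also have "\<dots> = 2 * exp E * (E / s)"
    by simp
  also have "\<dots> \<le> 2 * exp E * (c * r)"
    using assms(7) by (intro mult_left_mono) auto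
  finally have "x + exp E * ((exp E - exp (- E)) / s + y * exp E)
      \<le> r + exp E * (2 * exp E * (c * r) + r * exp E)"
    using assms(5,6) by (intro add_mono mult_left_mono) auto
  also have "\<dots> = r + (1 + 2 * c) * exp (2 * E) * r"
    by (simp add: algebra_simps flip: exp_add mult_2)
  also have "\<dots> \<le> (2 + 2 * c) * exp (2 * E) * r"
    using assms(1,3) mult_left_mono[of 1 "exp (2 * E)" r] by (simp add: algebra_simps)
  also have "\<dots> \<le> (2 + 2 * c) * exp (2 * c * a) * r"
    using assms by (intro mult_right_mono mult_left_mono) auto
  finally show ?thesis .
qed

lemma powr_minus_half_minus: "x > 0 \<Longrightarrow> x powr (- 1/2 - q) = x powr (- q) / sqrt x"
proof -
  assume "x > 0"
  have "x powr (- 1/2 - q) = x powr (- (1/2)) * x powr (- q)"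
    by (simp add: powr_add[symmetric])
  with \<open>x > 0\<close> show ?thesis
    by (simp add: powr_minus_divide powr_half_sqrt)
qed

lemma div_power_le_mult_powr:
  fixes x :: real
  assumes "1 \<le> x" "d \<ge> 1" "B \<ge> 0"
  shows "B / x ^ (m + 1) \<le> B * x powr (- 1/2 - real m / real d)"
proof -
  define q where "q = real m / real d"
  have "q \<le> real m"
    using assms(2) by (simp add: q_def divide_le_eq mult_le_cancel_left1)
  then have "x powr (1/2 + q) \<le> x powr real (m + 1)"
    using assms(1) by (intro powr_mono) auto
  then have "B / x powr real (m + 1) \<le> B / x powr (1/2 + q)"
    using assms by (intro divide_left_mono) auto
  moreover have "x ^ (m + 1) = x powr real (m + 1)"
    using assms(1) by (subst powr_realpow) auto
  moreover have "x powr (- 1/2 - q) = 1 / x powr (1/2 + q)"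
    using powr_minus_divide[of x "1/2 + q"] by (simp add: minus_add_distrib)
  ultimately show ?thesis
    by (simp add: q_def)
qed

lemma exists_grid_for_half_budget:
  assumes "d \<ge> 1" "2 * (2^m)^d \<le> n"
  obtains K :: nat where "K \<ge> 1" "real ((K * 2^m) ^ d) \<le> real n / 2"
    "(1 / real K) ^ m \<le> (2 * 2^m) ^ m * 2^m * real n powr (- (real m / real d))"
proof -
  have "real (2 * (2^m)^d) \<le> real n"
    using assms(2) by (simp only: of_nat_le_iff)
  then have "real (2^m) ^ d \<le> real n / 2"
    by simp
  then obtain K where K: "K \<ge> 1" "real ((K * 2^m) ^ d) \<le> real n / 2"
    "(1 / real K) ^ m \<le> (2 * 2^m) ^ m * (real n / 2) powr (- (real m / real d))"
    using exists_grid_resolution[OF assms(1), of "2^m" "real n / 2" m] by auto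
  have "(1::nat) \<le> (2^m)^d"
    by simp
  then have "real n > 0"
    using assms(2) by linarith
  have "2 powr (real m / real d) \<le> 2 powr real m"
    using assms(1) by (intro powr_mono) (auto simp: divide_le_eq mult_le_cancel_left1)
  moreover have "(real n / 2) powr (- (real m / real d)) = 2 powr (real m / real d) * real n powr (- (real m / real d))"
    using \<open>real n > 0\<close> by (simp add: powr_divide powr_minus_divide)
  ultimately have "(real n / 2) powr (- (real m / real d)) \<le> 2^m * real n powr (- (real m / real d))"
    by (simp add: mult_right_mono powr_realpow)
  then have "(2 * 2^m) ^ m * (real n / 2) powr (- (real m / real d))
      \<le> (2 * 2^m) ^ m * (2^m * real n powr (- (real m / real d)))"
    by (intro mult_left_mono) auto
  with K(3) have "(1 / real K) ^ m \<le> (2 * 2^m) ^ m * (2^m * real n powr (- (real m / real d)))"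
    by (rule order_trans)
  then have "(1 / real K) ^ m \<le> (2 * 2^m) ^ m * 2^m * real n powr (- (real m / real d))"
    by (simp only: mult.assoc)
  with K(1,2) that show ?thesis
    by blast
qed

lemma sigma_ad_le_randomized_algorithm:
  fixes B :: real and m K N NU k n :: nat
  assumes m: "m \<ge> 1" and K: "K \<ge> 1" and N: "N \<ge> 1" and NU: "NU \<ge> 1" and k: "k \<ge> 1"
    and n: "(K * 2^m) ^ CARD('d) + k \<le> n"
  defines "E \<equiv> interp_const m CARD('d) * B * (1 / real K)^m"
  shows "sigma_ad TYPE(nat \<Rightarrow> real) n (Fclass m B :: (real^'d \<Rightarrow> real) set) logint
    \<le> ennreal (B * real CARD('d) / real N
      + exp E * ((exp E - exp (- E)) / sqrt k + real (card (grid N :: (real^'d) set)) * exp E / NU))"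
proof -
  define xs where "xs = enum_list (grid (K * 2^m) :: (real^'d) set)"
  have xs: "set xs = grid (K * 2^m)" "length xs + k \<le> n"
    using n card_grid_le[where 'd = 'd, of "K * 2^m"]
    by (simp_all add: xs_def set_enum_list length_enum_list finite_grid)
  have \<Omega>: "finite (draws (real ` {..<NU}) k)" "draws (real ` {..<NU}) k \<noteq> {}"
    using NU by (simp_all add: finite_draws draws_nonempty lessThan_empty_iff)
  have cube: "rand_query m B xs N NU k \<omega> ys \<in> cube" for \<omega> ys
    using xs(1) grid_subset_cube N by (intro rand_query_in_cube) auto
  show ?thesis
    unfolding E_def
    by (rule sigma_ad_le_uniform[where \<Psi> = "rand_query m B xs N NU k"
          and \<Phi> = "rand_estimate m B xs N NU k" and S = logint,
          OF \<Omega> cube rand_estimate_mean_error[where B = B, OF _ m K N NU k xs]])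
qed

lemma exists_sample_sizes:
  fixes B :: real
  assumes "B > 0" "n \<ge> 1"
  obtains N NU :: nat where "N \<ge> 1" "NU \<ge> 1"
    "B * real CARD('d) / real N \<le> B * real n powr (- 1/2 - real m / real CARD('d))"
    "real (card (grid N :: (real^'d) set)) / real NU \<le> B * real n powr (- 1/2 - real m / real CARD('d))"
proof -
  define d where "d = CARD('d)"
  define N where "N = d * n^(m + 1)"
  define Q where "Q = n^(m + 1) * (nat \<lceil>1 / B\<rceil> + 1)"
  define NU where "NU = card (grid N :: (real^'d) set) * Q"
  have d: "d \<ge> 1"
    by (simp add: d_def card_ge_1)
  have "n^(m + 1) \<ge> 1"
    using assms(2) by simp
  then have "N \<ge> 1" "Q \<ge> 1"
    using d mult_le_mono[of 1 d 1 "n^(m + 1)"] mult_le_mono[of 1 "n^(m + 1)" 1 "nat \<lceil>1 / B\<rceil> + 1"]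
    by (simp_all add: N_def Q_def)
  moreover have "card (grid N :: (real^'d) set) \<ge> 1"
    using zero_in_grid[OF \<open>N \<ge> 1\<close>] finite_grid[of N]
    by (metis One_nat_def Suc_leI card_gt_0_iff empty_iff)
  ultimately have "NU \<ge> 1"
    by (simp add: NU_def)
  have small: "B / real n ^ (m + 1) \<le> B * real n powr (- 1/2 - real m / real d)"
    using assms d by (intro div_power_le_mult_powr) auto
  have "1 / B \<le> real (nat \<lceil>1 / B\<rceil> + 1)"
    by linarith
  then have "1 \<le> B * real (nat \<lceil>1 / B\<rceil> + 1)"
    using assms(1) by (simp add: pos_divide_le_eq mult.commute)
  then have "real n ^ (m + 1) * 1 \<le> real n ^ (m + 1) * (B * real (nat \<lceil>1 / B\<rceil> + 1))"
    by (intro mult_left_mono) auto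
  moreover have "real Q = real n ^ (m + 1) * real (nat \<lceil>1 / B\<rceil> + 1)"
    by (simp only: Q_def of_nat_mult of_nat_power)
  ultimately have "real n ^ (m + 1) \<le> B * real Q"
    by (simp only: mult_1_right mult.left_commute)
  moreover have "real Q > 0" "real n ^ (m + 1) > 0"
    using \<open>Q \<ge> 1\<close> assms(2) by simp_all
  ultimately have "1 / real Q \<le> B / real n ^ (m + 1)"
    by (simp add: field_simps)
  then have "real (card (grid N :: (real^'d) set)) / real NU \<le> B * real n powr (- 1/2 - real m / real d)"
    using small \<open>card (grid N :: (real^'d) set) \<ge> 1\<close> by (simp add: NU_def)
  moreover have "B * real d / real N \<le> B * real n powr (- 1/2 - real m / real d)"
    using small d by (simp add: N_def)
  ultimately show ?thesis
    using that \<open>N \<ge> 1\<close> \<open>NU \<ge> 1\<close> by (simp add: d_def)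
qed

lemma sigma_ad_randomized_rate_large_n:
  fixes m n :: nat and B :: real
  assumes m: "m \<ge> 1" and B: "B > 0" and n: "2 * (2^m)^CARD('d) \<le> n"
  defines "c \<equiv> interp_const m CARD('d) * (2 * 2^m)^m * 2^m"
  shows "sigma_ad TYPE(nat \<Rightarrow> real) n (Fclass m B :: (real^'d \<Rightarrow> real) set) logint
    \<le> ennreal ((2 + 4 * c) * exp (4 * c * (B * real n powr (- (real m / real CARD('d)))))
                 * (B * real n powr (- 1/2 - real m / real CARD('d))))"
proof -
  define d where "d = CARD('d)"
  define a where "a = B * real n powr (- (real m / real d))"
  define r where "r = B * real n powr (- 1/2 - real m / real d)"
  have d: "d \<ge> 1"
    by (simp add: d_def card_ge_1)
  have "(1::nat) \<le> (2^m)^CARD('d)"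
    by simp
  then have "n \<ge> 2"
    using n by linarith
  then have "real n > 0"
    by simp
  then have r: "r = a / sqrt n" "r \<ge> 0"
    using B powr_minus_half_minus[of "real n" "real m / real d"] by (simp_all add: r_def a_def)
  have "c \<ge> 0"
    using interp_const_nonneg by (simp add: c_def)
  obtain K where K: "K \<ge> 1" "real ((K * 2^m) ^ d) \<le> real n / 2"
    "(1 / real K) ^ m \<le> (2 * 2^m) ^ m * 2^m * real n powr (- (real m / real d))"
    using exists_grid_for_half_budget[OF d] n by (auto simp: d_def)
  define E where "E = interp_const m d * B * (1 / real K)^m"
  have E: "0 \<le> E" "E \<le> c * a"
    using K(3) B interp_const_nonneg[of m d]
    by (auto simp: E_def c_def a_def d_def mult_ac intro!: mult_left_mono)
  have "a \<ge> 0"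
    using B by (simp add: a_def)
  then have "E \<le> 2 * c * a"
    using E(2) mult_nonneg_nonneg[OF \<open>c \<ge> 0\<close> \<open>a \<ge> 0\<close>] by linarith
  define k where "k = n - (K * 2^m) ^ d"
  have k: "real k \<ge> real n / 2" "k \<ge> 1" "(K * 2^m) ^ d + k \<le> n"
    using K(2) \<open>n \<ge> 2\<close> by (simp_all add: k_def of_nat_diff del: of_nat_power of_nat_mult)
  obtain N NU where N: "N \<ge> 1" "NU \<ge> 1" "B * real d / real N \<le> r"
    "real (card (grid N :: (real^'d) set)) / real NU \<le> r"
    using exists_sample_sizes[OF B, of n m] \<open>n \<ge> 2\<close> by (auto simp: r_def d_def)
  have "(sqrt (real n) / 2)^2 \<le> real k"
    using k(1) \<open>real n > 0\<close> by (simp add: power_divide)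
  then have "sqrt (real n) / 2 \<le> sqrt (real k)"
    by (rule real_le_rsqrt)
  then have "E / sqrt k \<le> c * a / (sqrt n / 2)"
    using E \<open>real n > 0\<close> by (intro frac_le) auto
  also have "\<dots> = 2 * c * r"
    using r by simp
  finally have "E / sqrt k \<le> 2 * c * r" .
  then have "B * real d / real N + exp E * ((exp E - exp (- E)) / sqrt k
      + real (card (grid N :: (real^'d) set)) / real NU * exp E) \<le> (2 + 2 * (2 * c)) * exp (2 * (2 * c) * a) * r"
    using E(1) N(3,4) r(2) \<open>c \<ge> 0\<close> k(2) \<open>E \<le> 2 * c * a\<close>
    by (intro error_terms_le_exp_rate) auto
  also have "(2 + 2 * (2 * c)) * exp (2 * (2 * c) * a) * r = (2 + 4 * c) * exp (4 * c * a) * r"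
    by simp
  finally have bound: "B * real d / real N + exp E * ((exp E - exp (- E)) / sqrt k
      + real (card (grid N :: (real^'d) set)) / real NU * exp E) \<le> (2 + 4 * c) * exp (4 * c * a) * r" .
  have "sigma_ad TYPE(nat \<Rightarrow> real) n (Fclass m B :: (real^'d \<Rightarrow> real) set) logint
      \<le> ennreal (B * real d / real N + exp E * ((exp E - exp (- E)) / sqrt k
        + real (card (grid N :: (real^'d) set)) / real NU * exp E))"
    using sigma_ad_le_randomized_algorithm[OF m K(1) N(1,2) k(2), of n B] k(3)
    by (simp add: E_def d_def)
  from order_trans[OF this ennreal_leI[OF bound]] show ?thesis
    unfolding a_def r_def d_def .
qed

lemma rate_le_sqrt_mult_rate:
  fixes B c0 :: real and n n0 :: nat
  assumes "1 \<le> n" "n \<le> n0" "0 \<le> c0" "0 \<le> B"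
  shows "c0 * (B * real n powr (- q)) \<le> c0 * sqrt (real n0) * (B * real n powr (- 1/2 - q))"
proof -
  have "real n > 0"
    using assms(1) by simp
  then have "B * real n powr (- q) = sqrt (real n) * (B * real n powr (- 1/2 - q))"
    using powr_minus_half_minus[of "real n" q] by simp
  also have "\<dots> \<le> sqrt (real n0) * (B * real n powr (- 1/2 - q))"
    using assms by (intro mult_right_mono) auto
  finally show ?thesis
    using assms(3) by (simp add: mult.assoc mult_left_mono)
qed

lemma sigma_ad_randomized_rate:
  fixes m :: nat
  assumes "m \<ge> 1"
  shows "\<exists>C>0. \<exists>C'>0. \<forall>B>0. \<forall>n\<ge>1.
    sigma_ad TYPE(nat \<Rightarrow> real) n (Fclass m B :: (real^'d \<Rightarrow> real) set) logint
      \<le> ennreal (C' * (exp (C * B * real n powr (- (real m / real CARD('d))))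
                   * B * real n powr (- 1/2 - real m / real CARD('d))))"
proof -
  define d where "d = CARD('d)"
  define c where "c = interp_const m d * (2 * 2^m)^m * 2^m"
  define n0 :: nat where "n0 = 2 * (2^m)^d"
  obtain c0 where "c0 > 0" and det: "\<And>B n. B > 0 \<Longrightarrow> n \<ge> 1 \<Longrightarrow>
      sigma_ad TYPE(nat \<Rightarrow> real) n (Fclass m B :: (real^'d \<Rightarrow> real) set) logint
        \<le> ennreal (c0 * (B * real n powr (- (real m / real d))))"
    using sigma_ad_deterministic_rate[where 'w = "nat \<Rightarrow> real" and 'd = 'd, of m] by (auto simp: d_def)
  have "c \<ge> 0"
    using interp_const_nonneg by (simp add: c_def)
  define C' where "C' = max (2 + 4 * c) (c0 * sqrt (real n0))"
  have "sigma_ad TYPE(nat \<Rightarrow> real) n (Fclass m B :: (real^'d \<Rightarrow> real) set) logint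
      \<le> ennreal (C' * (exp ((4 * c + 1) * B * real n powr (- (real m / real CARD('d))))
                   * B * real n powr (- 1/2 - real m / real CARD('d))))"
    if "B > 0" "n \<ge> 1" for B :: real and n :: nat
  proof -
    define a where "a = B * real n powr (- (real m / real d))"
    define r where "r = B * real n powr (- 1/2 - real m / real d)"
    have "a \<ge> 0" "r \<ge> 0"
      using \<open>B > 0\<close> by (simp_all add: a_def r_def)
    have "exp (4 * c * a) \<le> exp ((4 * c + 1) * a)"
      using \<open>a \<ge> 0\<close> by (simp add: mult_right_mono)
    have "sigma_ad TYPE(nat \<Rightarrow> real) n (Fclass m B :: (real^'d \<Rightarrow> real) set) logint
        \<le> ennreal (C' * exp ((4 * c + 1) * a) * r)"
    proof (cases "n0 \<le> n")
      case True
      then have "sigma_ad TYPE(nat \<Rightarrow> real) n (Fclass m B :: (real^'d \<Rightarrow> real) set) logint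
          \<le> ennreal ((2 + 4 * c) * exp (4 * c * a) * r)"
        using sigma_ad_randomized_rate_large_n[OF assms \<open>B > 0\<close>, where 'd = 'd, of n]
        by (simp add: a_def r_def c_def d_def n0_def)
      also have "\<dots> \<le> ennreal (C' * exp ((4 * c + 1) * a) * r)"
        using \<open>exp (4 * c * a) \<le> _\<close> \<open>r \<ge> 0\<close> \<open>c \<ge> 0\<close>
        by (intro ennreal_leI mult_right_mono mult_mono) (auto simp: C'_def)
      finally show ?thesis .
    next
      case False
      have "c0 * a \<le> c0 * sqrt (real n0) * r"
        unfolding a_def r_def using False \<open>n \<ge> 1\<close> \<open>c0 > 0\<close> \<open>B > 0\<close>
        by (intro rate_le_sqrt_mult_rate) auto
      also have "\<dots> = c0 * sqrt (real n0) * 1 * r"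
        by simp
      also have "\<dots> \<le> C' * exp ((4 * c + 1) * a) * r"
        using \<open>r \<ge> 0\<close> \<open>c0 > 0\<close> \<open>a \<ge> 0\<close> \<open>c \<ge> 0\<close>
        by (intro mult_right_mono mult_mono) (auto simp: C'_def)
      finally have "c0 * a \<le> C' * exp ((4 * c + 1) * a) * r" .
      with det[OF \<open>B > 0\<close> \<open>n \<ge> 1\<close>] show ?thesis
        unfolding a_def by (rule order_trans[OF _ ennreal_leI])
    qed
    then show ?thesis
      by (simp add: a_def r_def d_def mult_ac)
  qed
  moreover have "4 * c + 1 > 0" "C' > 0"
    using \<open>c \<ge> 0\<close> \<open>c0 > 0\<close> by (auto simp: C'_def)
  ultimately show ?thesis
    by blast
qed

lemma le_ennreal_max_mult_min:
  fixes a b c1 c2 :: real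
  assumes "x \<le> ennreal (c1 * a)" "x \<le> ennreal (c2 * b)" "0 \<le> a" "0 \<le> b"
  shows "x \<le> ennreal (max c1 c2 * min a b)"
proof (cases "a \<le> b")
  case True
  then have "c1 * a \<le> max c1 c2 * min a b"
    using assms(3) by (simp add: mult_right_mono)
  with assms(1) show ?thesis
    by (rule order_trans[OF _ ennreal_leI])
next
  case False
  then have "c2 * b \<le> max c1 c2 * min a b"
    using assms(4) by (simp add: mult_right_mono)
  with assms(2) show ?thesis
    by (rule order_trans[OF _ ennreal_leI])
qed

theorem theorem6:
  fixes m :: nat
  assumes "m \<ge> 1"
  shows "\<exists>C>0. \<exists>C'>0. \<forall>B>0. \<forall>n::nat. n \<ge> 1 \<longrightarrow>
     sigma_ad TYPE(nat \<Rightarrow> real) n (Fclass m B :: (real^'d \<Rightarrow> real) set) logint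
       \<le> ennreal (C' * min (B * real n powr (- (real m / real CARD('d))))
                        (exp (C * B * real n powr (- (real m / real CARD('d))))
                           * B * real n powr (- 1/2 - real m / real CARD('d))))"
proof -
  obtain c0 where "c0 > 0" and det: "\<forall>B>0. \<forall>n\<ge>1.
      sigma_ad TYPE(nat \<Rightarrow> real) n (Fclass m B :: (real^'d \<Rightarrow> real) set) logint
        \<le> ennreal (c0 * (B * real n powr (- (real m / real CARD('d)))))"
    using sigma_ad_deterministic_rate by blast
  obtain C C' where "C > 0" "C' > 0" and rand: "\<forall>B>0. \<forall>n\<ge>1.
      sigma_ad TYPE(nat \<Rightarrow> real) n (Fclass m B :: (real^'d \<Rightarrow> real) set) logint
        \<le> ennreal (C' * (exp (C * B * real n powr (- (real m / real CARD('d))))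
                     * B * real n powr (- 1/2 - real m / real CARD('d))))"
    using sigma_ad_randomized_rate[OF assms] by blast
  have "max c0 C' > 0"
    using \<open>c0 > 0\<close> by simp
  moreover have "\<forall>B>0. \<forall>n\<ge>1.
      sigma_ad TYPE(nat \<Rightarrow> real) n (Fclass m B :: (real^'d \<Rightarrow> real) set) logint
        \<le> ennreal (max c0 C' * min (B * real n powr (- (real m / real CARD('d))))
                        (exp (C * B * real n powr (- (real m / real CARD('d))))
                           * B * real n powr (- 1/2 - real m / real CARD('d))))"
  proof (intro allI impI)
    fix B :: real and n :: nat
    assume "B > 0" "n \<ge> 1"
    with det rand show "sigma_ad TYPE(nat \<Rightarrow> real) n (Fclass m B :: (real^'d \<Rightarrow> real) set) logint
        \<le> ennreal (max c0 C' * min (B * real n powr (- (real m / real CARD('d))))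
                        (exp (C * B * real n powr (- (real m / real CARD('d))))
                           * B * real n powr (- 1/2 - real m / real CARD('d))))"
      by (intro le_ennreal_max_mult_min) simp_all
  qed
  ultimately show ?thesis
    using \<open>C > 0\<close> by blast
qed

end
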